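(* Let $\mathcal{L}$ be a set of graphs with no sources (all of sort $\emptyset$). Then $\mathcal{L}$ is recognizable in the graph algebra $\mathbf{G}$ if and only if, for every finite set $\tau\subseteq\mathbb{S}$, $\mathcal{L}$ is recognizable in the algebra $\mathbf{G}^\tau$.
   Context: Fix a countably infinite set $\mathbb{S}$ of source labels and a finite set $\mathbb{A}$ of edge labels with arities $\ge1$. A graph of sort $\tau$ ($\tau\subseteq\mathbb{S}$ finite) is an isomorphism class of finite hypergraphs with $\mathbb{A}$-labelled edges (each edge attached to a sequence of vertices of length the arity of its label) together with an injective map from $\tau$ to the vertices ($s$-sources). The HR algebra $\mathbf{G}$ has the finite subsets of $\mathbb{S}$ as sorts, universe of sort $\tau$ the graphs of sort $\tau$, and operations: constants $\mathbf{0}_\tau$ (only sources from $\tau$), $\mathbf{a}_{(s_1,\ldots,s_{\#a})}$ (one $a$-edge attached to an $s_1$-,…, $s_{\#a}$-source); unary $\mathsf{restrict}_\tau$ (removes source labels outside $\tau$, keeping vertices; sort $\tau'\mapsto\tau\cap\tau'$); unary $\mathsf{rename}_\alpha$ for finite permutations $\alpha$ of $\mathbb{S}$ (source map $\xi\mapsto\xi\circ\alpha$, sort $\tau\mapsto\alpha^{-1}(\tau)$); binary $\parallel$ (disjoint union then fusion of sources with equal label). For finite $\tau$, $\mathbf{G}^\tau$ is the subalgebra with sorts the subsets of $\tau$, universe the graphs of sort $\subseteq\tau$, and operations $\mathbf{0}_{\tau'}$ ($\tau'\subseteq\tau$), $\mathbf{a}_{(s_1,\ldots)}$ ($s_i\in\tau$),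 $\mathsf{restrict}_{\tau'}$ ($\tau'\subseteq\tau$), $\mathsf{rename}_\alpha$ ($\alpha$ fixing every element outside $\tau$), $\parallel$. A set $L$ is recognizable in a many-sorted algebra $\mathbf{A}$ if there is a congruence on $\mathbf{A}$ (equivalence relating only elements of the same sort, compatible with all operations) with finitely many classes of each sort such that $L$ is a union of classes. *)

theory Defs
  imports Main
begin

text \<open>Source labels are natural numbers (a countably infinite set S = nat).
  Edge labels are the elements of a finite type 'a, with arity function ar.\<close>

record 'a cgraph =
  verts :: "nat set"
  edges :: "nat set"
  lab   :: "nat \<Rightarrow> 'a"
  att   :: "nat \<Rightarrow> nat list"
  src   :: "nat \<Rightarrow> nat option"

definition wf_cgraph :: "('a \<Rightarrow> nat) \<Rightarrow> 'a cgraph \<Rightarrow> bool" where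
  "wf_cgraph ar G \<longleftrightarrow>
     finite (verts G) \<and> finite (edges G) \<and>
     (\<forall>e\<in>edges G. length (att G e) = ar (lab G e) \<and> set (att G e) \<subseteq> verts G) \<and>
     finite (dom (src G)) \<and> inj_on (src G) (dom (src G)) \<and> ran (src G) \<subseteq> verts G"

definition cg_iso :: "'a cgraph \<Rightarrow> 'a cgraph \<Rightarrow> bool" where
  "cg_iso G H \<longleftrightarrow> (\<exists>f g. bij_betw f (verts G) (verts H) \<and> bij_betw g (edges G) (edges H) \<and>
     (\<forall>e\<in>edges G. lab H (g e) = lab G e \<and> att H (g e) = map f (att G e)) \<and>
     (\<forall>s. src H s = map_option f (src G s)))"

text \<open>A graph is an isomorphism class of well-formed concrete graphs.\<close>
definition iso_class :: "('a \<Rightarrow> nat) \<Rightarrow> 'a cgraph \<Rightarrow> 'a cgraph set" where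
  "iso_class ar G = {H. wf_cgraph ar H \<and> cg_iso G H}"

definition graphs :: "('a \<Rightarrow> nat) \<Rightarrow> 'a cgraph set set" where
  "graphs ar = iso_class ar ` {G. wf_cgraph ar G}"

definition rep :: "'a cgraph set \<Rightarrow> 'a cgraph" where
  "rep C = (SOME G. G \<in> C)"

definition gsort :: "'a cgraph set \<Rightarrow> nat set" where
  "gsort C = dom (src (rep C))"

definition c_restrict :: "nat set \<Rightarrow> 'a cgraph \<Rightarrow> 'a cgraph" where
  "c_restrict \<tau> G = G\<lparr>src := src G |` \<tau>\<rparr>"

definition c_rename :: "(nat \<Rightarrow> nat) \<Rightarrow> 'a cgraph \<Rightarrow> 'a cgraph" where
  "c_rename \<alpha> G = G\<lparr>src := src G \<circ> \<alpha>\<rparr>"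

text \<open>Parallel composition: vertices of G become 2v, vertices of H become 2v+1,
  except that an s-source of H is identified with the s-source of G when both exist.\<close>
definition par_vmap :: "'a cgraph \<Rightarrow> 'a cgraph \<Rightarrow> nat \<Rightarrow> nat" where
  "par_vmap G H v =
     (if \<exists>s. src H s = Some v \<and> s \<in> dom (src G)
      then 2 * the (src G (SOME s. src H s = Some v \<and> s \<in> dom (src G)))
      else 2 * v + 1)"

definition c_par :: "'a cgraph \<Rightarrow> 'a cgraph \<Rightarrow> 'a cgraph" where
  "c_par G H = \<lparr> verts = (\<lambda>v. 2 * v) ` verts G \<union> par_vmap G H ` verts H,
                 edges = (\<lambda>e. 2 * e) ` edges G \<union> (\<lambda>e. 2 * e + 1) ` edges H,
                 lab = (\<lambda>e. if even e then lab G (e div 2) else lab H (e div 2)),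
                 att = (\<lambda>e. if even e then map (\<lambda>v. 2 * v) (att G (e div 2))
                           else map (par_vmap G H) (att H (e div 2))),
                 src = (\<lambda>s. case src G s of Some v \<Rightarrow> Some (2 * v)
                                       | None \<Rightarrow> map_option (par_vmap G H) (src H s)) \<rparr>"

definition g_restrict :: "('a \<Rightarrow> nat) \<Rightarrow> nat set \<Rightarrow> 'a cgraph set \<Rightarrow> 'a cgraph set" where
  "g_restrict ar \<tau> C = iso_class ar (c_restrict \<tau> (rep C))"

definition g_rename :: "('a \<Rightarrow> nat) \<Rightarrow> (nat \<Rightarrow> nat) \<Rightarrow> 'a cgraph set \<Rightarrow> 'a cgraph set" where
  "g_rename ar \<alpha> C = iso_class ar (c_rename \<alpha> (rep C))"

definition g_par :: "('a \<Rightarrow> nat) \<Rightarrow> 'a cgraph set \<Rightarrow> 'a cgraph set \<Rightarrow> 'a cgraph set" where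
  "g_par ar C D = iso_class ar (c_par (rep C) (rep D))"

definition finperm :: "(nat \<Rightarrow> nat) \<Rightarrow> bool" where
  "finperm \<alpha> \<longleftrightarrow> bij \<alpha> \<and> finite {s. \<alpha> s \<noteq> s}"

text \<open>A congruence on the (sub)algebra with universe U, restriction operations indexed
  by Rst, renaming operations indexed by Perm, and parallel composition; constants
  impose no compatibility condition.\<close>
definition hr_congruence ::
  "('a \<Rightarrow> nat) \<Rightarrow> 'a cgraph set set \<Rightarrow> nat set set \<Rightarrow> (nat \<Rightarrow> nat) set
   \<Rightarrow> ('a cgraph set \<times> 'a cgraph set) set \<Rightarrow> bool" where
  "hr_congruence ar U Rst Perm R \<longleftrightarrow>
     equiv U R \<and>
     (\<forall>(x, y)\<in>R. gsort x = gsort y) \<and>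
     (\<forall>\<tau>\<in>Rst. \<forall>(x, y)\<in>R. (g_restrict ar \<tau> x, g_restrict ar \<tau> y) \<in> R) \<and>
     (\<forall>\<alpha>\<in>Perm. \<forall>(x, y)\<in>R. (g_rename ar \<alpha> x, g_rename ar \<alpha> y) \<in> R) \<and>
     (\<forall>(x, y)\<in>R. \<forall>(x', y')\<in>R. (g_par ar x x', g_par ar y y') \<in> R) \<and>
     (\<forall>\<sigma>. finite ({x\<in>U. gsort x = \<sigma>} // R))"

definition recognizable_in ::
  "('a \<Rightarrow> nat) \<Rightarrow> 'a cgraph set set \<Rightarrow> nat set set \<Rightarrow> (nat \<Rightarrow> nat) set
   \<Rightarrow> 'a cgraph set set \<Rightarrow> bool" where
  "recognizable_in ar U Rst Perm L \<longleftrightarrow>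
     (\<exists>R. hr_congruence ar U Rst Perm R \<and> L \<subseteq> U \<and> (\<forall>(x, y)\<in>R. x \<in> L \<longrightarrow> y \<in> L))"

definition recognizable_G :: "('a \<Rightarrow> nat) \<Rightarrow> 'a cgraph set set \<Rightarrow> bool" where
  "recognizable_G ar L =
     recognizable_in ar (graphs ar) {\<tau>. finite \<tau>} {\<alpha>. finperm \<alpha>} L"

definition recognizable_Gtau :: "('a \<Rightarrow> nat) \<Rightarrow> nat set \<Rightarrow> 'a cgraph set set \<Rightarrow> bool" where
  "recognizable_Gtau ar \<tau> L =
     recognizable_in ar {x\<in>graphs ar. gsort x \<subseteq> \<tau>} (Pow \<tau>)
       {\<alpha>. finperm \<alpha> \<and> (\<forall>s. s \<notin> \<tau> \<longrightarrow> \<alpha> s = s)} L"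

end

theory Submission
  imports Defs "HOL-Combinatorics.Transposition"
begin

text \<open>
  A congruence of \<open>G\<close> saturating \<open>L\<close> restricts to a congruence of \<open>G\<^sup>\<tau>\<close>: the operations of
  \<open>G\<^sup>\<tau>\<close> do not leave the graphs of sort included in \<open>\<tau>\<close>, and each sort of \<open>G\<^sup>\<tau>\<close> is a
  whole sort of \<open>G\<close>, so the restriction still has finitely many classes per sort.

  Conversely, consider the syntactic congruence of \<open>L\<close> with respect to the contexts
  \<open>x \<mapsto> restrict\<^sub>\<emptyset> (x \<parallel> H)\<close>, \<open>H\<close> an arbitrary graph. It is compatible with \<open>\<parallel>\<close> by associativity
  and commutativity, with \<open>rename\<^sub>\<alpha>\<close> because the renaming can be moved onto \<open>H\<close>, and with
  \<open>restrict\<^sub>\<tau>\<close> because \<open>H\<close> can first be renamed so that the sources of \<open>x\<close> forgotten by the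
  restriction meet no source of \<open>H\<close>. For \<open>x\<close> of sort \<open>\<sigma>\<close> the context only depends on
  \<open>restrict\<^sub>\<sigma> H\<close>, so it is a polynomial of \<open>G\<^sup>\<sigma>\<close>; hence a congruence of \<open>G\<^sup>\<sigma>\<close> saturating \<open>L\<close>
  refines the syntactic congruence on sort \<open>\<sigma>\<close>, which therefore has finitely many classes there.
  It saturates \<open>L\<close> because \<open>x = restrict\<^sub>\<emptyset> (x \<parallel> \<zero>)\<close> for a graph \<open>x\<close> without sources.

  Identities between the operations are proved on representatives: both sides are gluings of
  one family of concrete graphs along equally labelled sources, and gluings are unique up to
  isomorphism.
\<close>

lemma ex_bij_fixing_avoiding:
  fixes X A T :: "'a set"
  assumes "infinite (UNIV :: 'a set)" and "finite X" and "finite A" and "finite T" and "X \<inter> A = {}"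
  shows "\<exists>\<beta>. bij \<beta> \<and> (\<forall>a\<in>A. \<beta> a = a) \<and> \<beta> ` X \<inter> T = {}"
  using assms(2,3,5)
proof (induction X arbitrary: A rule: finite_induct)
  case empty
  show ?case
  proof (intro exI conjI)
    show "bij id"
      by (rule bij_id)
  qed simp_all
next
  case (insert x X)
  have "finite (insert x A)" and "X \<inter> insert x A = {}"
    using insert.hyps(2) insert.prems by auto
  then obtain \<beta>0 where \<beta>0: "bij \<beta>0" "\<forall>a\<in>insert x A. \<beta>0 a = a" "\<beta>0 ` X \<inter> T = {}"
    using insert.IH by meson
  show ?case
  proof (cases "x \<in> T")
    case False
    with \<beta>0 show ?thesis
      by auto
  next
    case True
    have "finite (T \<union> A \<union> \<beta>0 ` X \<union> {x})"
      using insert.hyps(1) insert.prems(1) assms(4) by simp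
    then obtain f where f: "f \<notin> T \<union> A \<union> \<beta>0 ` X \<union> {x}"
      using ex_new_if_finite[OF assms(1)] by meson
    have "transpose x f (\<beta>0 y) = \<beta>0 y" if "y \<in> X" for y
    proof (rule transpose_apply_other)
      show "\<beta>0 y \<noteq> x"
        using that insert.hyps(2) \<beta>0(1,2) by (metis bij_is_inj inj_eq insertI1)
      show "\<beta>0 y \<noteq> f"
        using that f by blast
    qed
    then have "(transpose x f \<circ> \<beta>0) ` insert x X \<inter> T = {}"
      using f \<beta>0(2,3) by auto
    moreover have "\<forall>a\<in>A. (transpose x f \<circ> \<beta>0) a = a"
      using f \<beta>0(2) insert.prems(2) by (auto simp: transpose_def)
    moreover have "bij (transpose x f \<circ> \<beta>0)"
      using \<beta>0(1) by (rule bij_comp) simp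
    ultimately show ?thesis
      by blast
  qed
qed

lemma finite_quotient_coarser:
  assumes R: "equiv B R" and E: "equiv C E" and "A \<subseteq> B" and closed: "R `` A \<subseteq> A"
    and finer: "\<And>x y. x \<in> A \<Longrightarrow> (x, y) \<in> R \<Longrightarrow> (x, y) \<in> E"
    and "finite (A // R)"
  shows "finite (A // E)"
proof -
  have "E `` {x} = E `` (R `` {x})" if "x \<in> A" for x
  proof
    have "(x, x) \<in> R"
      using R \<open>A \<subseteq> B\<close> that by (auto simp: equiv_def refl_on_def)
    then show "E `` {x} \<subseteq> E `` (R `` {x})"
      by blast
    show "E `` (R `` {x}) \<subseteq> E `` {x}"
      using finer[OF that] E closed that by (auto simp: equiv_def dest: transD)
  qed
  then have "A // E \<subseteq> (\<lambda>X. E `` X) ` (A // R)"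
    by (auto simp: quotient_def)
  then show ?thesis
    using \<open>finite (A // R)\<close> by (meson finite_imageI finite_subset)
qed

section \<open>Isomorphism of concrete graphs\<close>

definition cg_iso_by :: "'a cgraph \<Rightarrow> 'a cgraph \<Rightarrow> (nat \<Rightarrow> nat) \<Rightarrow> (nat \<Rightarrow> nat) \<Rightarrow> bool" where
  "cg_iso_by G H f g \<longleftrightarrow> bij_betw f (verts G) (verts H) \<and> bij_betw g (edges G) (edges H) \<and>
     (\<forall>e\<in>edges G. lab H (g e) = lab G e \<and> att H (g e) = map f (att G e)) \<and>
     (\<forall>s. src H s = map_option f (src G s))"

lemma cg_iso_iff_cg_iso_by: "cg_iso G H \<longleftrightarrow> (\<exists>f g. cg_iso_by G H f g)"
  unfolding cg_iso_def cg_iso_by_def by blast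

lemma cg_iso_refl: "cg_iso G G"
  unfolding cg_iso_iff_cg_iso_by cg_iso_by_def by (auto simp: option.map_id intro!: exI[of _ id])

lemma cg_iso_trans [trans]:
  assumes "cg_iso G H" and "cg_iso H K"
  shows "cg_iso G K"
proof -
  obtain f g f' g' where "cg_iso_by G H f g" and "cg_iso_by H K f' g'"
    using assms unfolding cg_iso_iff_cg_iso_by by blast
  then have "cg_iso_by G K (f' \<circ> f) (g' \<circ> g)"
    unfolding cg_iso_by_def
    by (auto simp: option.map_comp intro: bij_betw_trans dest: bij_betw_apply)
  then show ?thesis
    unfolding cg_iso_iff_cg_iso_by by blast
qed

lemma wf_cgraph_att_verts: "wf_cgraph ar G \<Longrightarrow> e \<in> edges G \<Longrightarrow> set (att G e) \<subseteq> verts G"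
  by (simp add: wf_cgraph_def)

lemma wf_cgraph_att_length: "wf_cgraph ar G \<Longrightarrow> e \<in> edges G \<Longrightarrow> length (att G e) = ar (lab G e)"
  by (simp add: wf_cgraph_def)

lemma wf_cgraph_src_verts: "wf_cgraph ar G \<Longrightarrow> src G s = Some v \<Longrightarrow> v \<in> verts G"
  unfolding wf_cgraph_def by (auto intro: ranI)

lemma wf_cgraph_src_inj: "wf_cgraph ar G \<Longrightarrow> src G s = Some v \<Longrightarrow> src G t = Some v \<Longrightarrow> s = t"
  unfolding wf_cgraph_def inj_on_def by (metis domI)

lemma wf_cgraph_finite_src: "wf_cgraph ar G \<Longrightarrow> finite (dom (src G))"
  by (simp add: wf_cgraph_def)

lemma cg_iso_sym:
  assumes wf: "wf_cgraph ar G" and "cg_iso G H"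
  shows "cg_iso H G"
proof -
  obtain f g where "cg_iso_by G H f g"
    using assms(2) unfolding cg_iso_iff_cg_iso_by by blast
  then have f: "bij_betw f (verts G) (verts H)" and g: "bij_betw g (edges G) (edges H)"
    and edge: "\<And>e. e \<in> edges G \<Longrightarrow> lab H (g e) = lab G e \<and> att H (g e) = map f (att G e)"
    and src: "\<And>s. src H s = map_option f (src G s)"
    unfolding cg_iso_by_def by auto
  define f' where "f' = inv_into (verts G) f"
  define g' where "g' = inv_into (edges G) g"
  have f'f: "f' (f v) = v" if "v \<in> verts G" for v
    using f that unfolding f'_def by (simp add: bij_betw_def inv_into_f_f)
  have "cg_iso_by H G f' g'"
    unfolding cg_iso_by_def
  proof (intro conjI ballI allI)
    show "bij_betw f' (verts H) (verts G)" "bij_betw g' (edges H) (edges G)"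
      using f g unfolding f'_def g'_def by (simp_all add: bij_betw_inv_into)
  next
    fix e assume "e \<in> edges H"
    then have e': "g' e \<in> edges G" "g (g' e) = e"
      using g unfolding g'_def by (auto simp: bij_betw_def inv_into_into f_inv_into_f)
    have "map f' (att H e) = map (f' \<circ> f) (att G (g' e))"
      using edge[OF e'(1)] e'(2) by simp
    also have "\<dots> = att G (g' e)"
      using wf_cgraph_att_verts[OF wf e'(1)] f'f by (intro map_idI) auto
    finally show "att G (g' e) = map f' (att H e)"
      by simp
    show "lab G (g' e) = lab H e"
      using edge[OF e'(1)] e'(2) by simp
  next
    fix s show "src G s = map_option f' (src H s)"
      using src f'f wf_cgraph_src_verts[OF wf] by (cases "src G s") auto
  qed
  then show ?thesis
    unfolding cg_iso_iff_cg_iso_by by blast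
qed

lemma iso_class_eq_iff:
  assumes "wf_cgraph ar G" and "wf_cgraph ar G'"
  shows "iso_class ar G = iso_class ar G' \<longleftrightarrow> cg_iso G G'"
proof
  assume "iso_class ar G = iso_class ar G'"
  moreover have "G' \<in> iso_class ar G'"
    using assms(2) cg_iso_refl by (simp add: iso_class_def)
  ultimately have "G' \<in> iso_class ar G"
    by simp
  then show "cg_iso G G'"
    by (simp add: iso_class_def)
next
  assume "cg_iso G G'"
  moreover have "cg_iso G' G"
    using cg_iso_sym[OF assms(1) \<open>cg_iso G G'\<close>] .
  ultimately show "iso_class ar G = iso_class ar G'"
    unfolding iso_class_def by (blast intro: cg_iso_trans)
qed

lemma rep_iso_class:
  assumes "wf_cgraph ar G"
  shows "wf_cgraph ar (rep (iso_class ar G))" and "cg_iso G (rep (iso_class ar G))"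
proof -
  have "G \<in> iso_class ar G"
    using assms cg_iso_refl by (simp add: iso_class_def)
  then have "rep (iso_class ar G) \<in> iso_class ar G"
    unfolding rep_def by (rule someI)
  then show "wf_cgraph ar (rep (iso_class ar G))" and "cg_iso G (rep (iso_class ar G))"
    by (simp_all add: iso_class_def)
qed

lemma graphsE:
  assumes "x \<in> graphs ar"
  obtains G where "wf_cgraph ar G" and "x = iso_class ar G"
  using assms unfolding graphs_def by auto

lemma graphsI: "wf_cgraph ar G \<Longrightarrow> iso_class ar G \<in> graphs ar"
  unfolding graphs_def by auto

lemma gsort_iso_class:
  assumes "wf_cgraph ar G"
  shows "gsort (iso_class ar G) = dom (src G)"
proof -
  obtain f g where "cg_iso_by G (rep (iso_class ar G)) f g"
    using rep_iso_class[OF assms] unfolding cg_iso_iff_cg_iso_by by blast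
  then show ?thesis
    unfolding gsort_def cg_iso_by_def by auto
qed

lemma finite_gsort: "x \<in> graphs ar \<Longrightarrow> finite (gsort x)"
  by (erule graphsE) (simp add: gsort_iso_class wf_cgraph_finite_src)

lemma c_restrict_simps [simp]:
  "verts (c_restrict \<tau> G) = verts G" "edges (c_restrict \<tau> G) = edges G"
  "lab (c_restrict \<tau> G) = lab G" "att (c_restrict \<tau> G) = att G"
  "src (c_restrict \<tau> G) = src G |` \<tau>"
  by (simp_all add: c_restrict_def)

lemma c_rename_simps [simp]:
  "verts (c_rename \<alpha> G) = verts G" "edges (c_rename \<alpha> G) = edges G"
  "lab (c_rename \<alpha> G) = lab G" "att (c_rename \<alpha> G) = att G"
  "src (c_rename \<alpha> G) = src G \<circ> \<alpha>"
  by (simp_all add: c_rename_def)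

lemma wf_c_restrict:
  assumes "wf_cgraph ar G"
  shows "wf_cgraph ar (c_restrict \<tau> G)"
proof -
  have "inj_on (src G |` \<tau>) (dom (src G |` \<tau>))"
    using wf_cgraph_src_inj[OF assms] by (auto simp: inj_on_def restrict_map_def split: if_splits)
  moreover have "ran (src G |` \<tau>) \<subseteq> verts G"
    using wf_cgraph_src_verts[OF assms] by (auto simp: ran_def restrict_map_def split: if_splits)
  ultimately show ?thesis
    using assms by (simp add: wf_cgraph_def)
qed

lemma wf_c_rename:
  assumes "wf_cgraph ar G" and "bij \<alpha>"
  shows "wf_cgraph ar (c_rename \<alpha> G)"
proof -
  have "dom (src G \<circ> \<alpha>) = \<alpha> -` dom (src G)"
    by auto
  then have "finite (dom (src G \<circ> \<alpha>))"
    using wf_cgraph_finite_src[OF assms(1)] assms(2) by (simp add: finite_vimageI bij_is_inj)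
  moreover have "inj_on (src G \<circ> \<alpha>) (dom (src G \<circ> \<alpha>))"
  proof (rule inj_onI)
    fix x y assume "x \<in> dom (src G \<circ> \<alpha>)" and "(src G \<circ> \<alpha>) x = (src G \<circ> \<alpha>) y"
    then obtain v where "src G (\<alpha> x) = Some v" and "src G (\<alpha> y) = Some v"
      by auto
    then have "\<alpha> x = \<alpha> y"
      using wf_cgraph_src_inj[OF assms(1)] by blast
    then show "x = y"
      using bij_is_inj[OF assms(2)] by (simp add: inj_eq)
  qed
  moreover have "ran (src G \<circ> \<alpha>) \<subseteq> verts G"
    using wf_cgraph_src_verts[OF assms(1)] by (auto simp: ran_def)
  ultimately show ?thesis
    using assms(1) by (simp add: wf_cgraph_def)
qed

lemma cg_iso_by_c_restrict:
  "cg_iso_by G H f g \<Longrightarrow> cg_iso_by (c_restrict \<tau> G) (c_restrict \<tau> H) f g"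
  unfolding cg_iso_by_def by (simp add: restrict_map_def)

lemma cg_iso_c_restrict: "cg_iso G H \<Longrightarrow> cg_iso (c_restrict \<tau> G) (c_restrict \<tau> H)"
  unfolding cg_iso_iff_cg_iso_by using cg_iso_by_c_restrict by blast

lemma cg_iso_by_c_rename:
  "cg_iso_by G H f g \<Longrightarrow> cg_iso_by (c_rename \<alpha> G) (c_rename \<alpha> H) f g"
  unfolding cg_iso_by_def by simp

lemma cg_iso_c_rename: "cg_iso G H \<Longrightarrow> cg_iso (c_rename \<alpha> G) (c_rename \<alpha> H)"
  unfolding cg_iso_iff_cg_iso_by using cg_iso_by_c_rename by blast

lemma g_restrict_iso_class:
  assumes "wf_cgraph ar G"
  shows "g_restrict ar \<tau> (iso_class ar G) = iso_class ar (c_restrict \<tau> G)"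
  using rep_iso_class[OF assms] cg_iso_sym[OF assms]
  by (simp add: g_restrict_def iso_class_eq_iff wf_c_restrict assms cg_iso_c_restrict)

lemma g_rename_iso_class:
  assumes "wf_cgraph ar G" and "bij \<alpha>"
  shows "g_rename ar \<alpha> (iso_class ar G) = iso_class ar (c_rename \<alpha> G)"
  using rep_iso_class[OF assms(1)] cg_iso_sym[OF assms(1)]
  by (simp add: g_rename_def iso_class_eq_iff wf_c_rename assms cg_iso_c_rename)

lemma c_restrict_empty_c_restrict [simp]: "c_restrict {} (c_restrict \<tau> G) = c_restrict {} G"
  by (simp add: c_restrict_def)

lemma c_restrict_empty_c_rename [simp]: "c_restrict {} (c_rename \<alpha> G) = c_restrict {} G"
  by (simp add: c_restrict_def c_rename_def)

lemma c_restrict_empty_eq_self: "dom (src G) = {} \<Longrightarrow> c_restrict {} G = G"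
  by (simp add: c_restrict_def)

lemma c_restrict_empty_eq_iff:
  "c_restrict {} G = c_restrict {} H \<longleftrightarrow>
     verts G = verts H \<and> edges G = edges H \<and> lab G = lab H \<and> att G = att H"
  by (cases G; cases H) (simp add: c_restrict_def)

section \<open>Gluing along sources\<close>

definition src_match :: "'a cgraph \<Rightarrow> 'a cgraph \<Rightarrow> (nat \<times> nat) set" where
  "src_match G H = {(v, w). \<exists>s. src G s = Some v \<and> src H s = Some w}"

lemma src_match_converse: "src_match H G = (src_match G H)\<inverse>"
  by (auto simp: src_match_def)

lemma src_match_self_iff [simp]: "(v = w \<or> (v, w) \<in> src_match G G) \<longleftrightarrow> v = w"
  by (auto simp: src_match_def)

text \<open>The sources of \<open>K\<close> are
  described separately by \<open>glued_sources\<close>, because several identities are only needed after all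
  sources have been forgotten.\<close>

definition glued ::
  "nat set \<Rightarrow> (nat \<Rightarrow> 'a cgraph) \<Rightarrow> 'a cgraph \<Rightarrow> (nat \<Rightarrow> nat \<Rightarrow> nat) \<Rightarrow> (nat \<Rightarrow> nat \<Rightarrow> nat) \<Rightarrow> bool"
where
  "glued I Gs K F P \<longleftrightarrow>
     verts K = (\<Union>i\<in>I. F i ` verts (Gs i)) \<and>
     (\<forall>i\<in>I. \<forall>j\<in>I. \<forall>v\<in>verts (Gs i). \<forall>w\<in>verts (Gs j).
        F i v = F j w \<longleftrightarrow> (i = j \<and> v = w) \<or> (v, w) \<in> src_match (Gs i) (Gs j)) \<and>
     edges K = (\<Union>i\<in>I. P i ` edges (Gs i)) \<and>
     (\<forall>i\<in>I. \<forall>j\<in>I. \<forall>e\<in>edges (Gs i). \<forall>e'\<in>edges (Gs j). P i e = P j e' \<longleftrightarrow> i = j \<and> e = e') \<and>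
     (\<forall>i\<in>I. \<forall>e\<in>edges (Gs i).
        lab K (P i e) = lab (Gs i) e \<and> att K (P i e) = map (F i) (att (Gs i) e))"

definition glued_sources :: "nat set \<Rightarrow> (nat \<Rightarrow> 'a cgraph) \<Rightarrow> 'a cgraph \<Rightarrow> (nat \<Rightarrow> nat \<Rightarrow> nat) \<Rightarrow> bool" where
  "glued_sources I Gs K F \<longleftrightarrow>
     (\<forall>s. \<forall>i\<in>I. \<forall>v. src (Gs i) s = Some v \<longrightarrow> src K s = Some (F i v)) \<and>
     (\<forall>s. (\<forall>i\<in>I. src (Gs i) s = None) \<longrightarrow> src K s = None)"

lemma
  assumes "glued I Gs K F P"
  shows glued_verts: "verts K = (\<Union>i\<in>I. F i ` verts (Gs i))"
    and glued_vert_eq_iff: "\<lbrakk>i \<in> I; j \<in> I; v \<in> verts (Gs i); w \<in> verts (Gs j)\<rbrakk> \<Longrightarrow>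
      F i v = F j w \<longleftrightarrow> (i = j \<and> v = w) \<or> (v, w) \<in> src_match (Gs i) (Gs j)"
    and glued_edges: "edges K = (\<Union>i\<in>I. P i ` edges (Gs i))"
    and glued_edge_eq_iff: "\<lbrakk>i \<in> I; j \<in> I; e \<in> edges (Gs i); e' \<in> edges (Gs j)\<rbrakk> \<Longrightarrow>
      P i e = P j e' \<longleftrightarrow> i = j \<and> e = e'"
    and glued_lab: "\<lbrakk>i \<in> I; e \<in> edges (Gs i)\<rbrakk> \<Longrightarrow> lab K (P i e) = lab (Gs i) e"
    and glued_att: "\<lbrakk>i \<in> I; e \<in> edges (Gs i)\<rbrakk> \<Longrightarrow> att K (P i e) = map (F i) (att (Gs i) e)"
  using assms unfolding glued_def by simp_all

lemma
  assumes "glued_sources I Gs K F"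
  shows glued_sources_Some: "\<lbrakk>i \<in> I; src (Gs i) s = Some v\<rbrakk> \<Longrightarrow> src K s = Some (F i v)"
    and glued_sources_None: "(\<And>i. i \<in> I \<Longrightarrow> src (Gs i) s = None) \<Longrightarrow> src K s = None"
  using assms unfolding glued_sources_def by simp_all

lemma glued_sourcesE:
  assumes "glued_sources I Gs K F" and "src K s = Some u"
  obtains i v where "i \<in> I" and "src (Gs i) s = Some v"
  using glued_sources_None[OF assms(1), of s] assms(2) by fastforce

lemma glued_src_iff:
  assumes "glued I Gs K F P" and "glued_sources I Gs K F" and wf: "\<forall>i\<in>I. wf_cgraph ar (Gs i)"
    and i: "i \<in> I" and v: "v \<in> verts (Gs i)"
  shows "src K s = Some (F i v) \<longleftrightarrow> src (Gs i) s = Some v"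
proof
  assume K: "src K s = Some (F i v)"
  obtain j u where j: "j \<in> I" and u: "src (Gs j) s = Some u"
    using assms(2) K by (rule glued_sourcesE)
  have "F j u = F i v"
    using glued_sources_Some[OF assms(2) j u] K by simp
  then have "(j = i \<and> u = v) \<or> (u, v) \<in> src_match (Gs j) (Gs i)"
    using glued_vert_eq_iff[OF assms(1) j i _ v] wf_cgraph_src_verts[of ar "Gs j"] wf j u by blast
  then show "src (Gs i) s = Some v"
    using u wf_cgraph_src_inj[of ar "Gs j"] wf j by (auto simp: src_match_def)
qed (rule glued_sources_Some[OF assms(2) i])

lemma ex_bij_betw_UN_images:
  fixes F F' :: "'i \<Rightarrow> 'v \<Rightarrow> 'w"
  assumes "\<forall>i\<in>I. \<forall>j\<in>I. \<forall>v\<in>A i. \<forall>w\<in>A j. F i v = F j w \<longleftrightarrow> F' i v = F' j w"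
  shows "\<exists>\<phi>. bij_betw \<phi> (\<Union>i\<in>I. F i ` A i) (\<Union>i\<in>I. F' i ` A i) \<and> (\<forall>i\<in>I. \<forall>v\<in>A i. \<phi> (F i v) = F' i v)"
proof -
  have transfer: "\<exists>\<phi>. \<forall>i\<in>I. \<forall>v\<in>A i. \<phi> (F i v) = F' i v"
    if same: "\<And>i j v w. \<lbrakk>i \<in> I; j \<in> I; v \<in> A i; w \<in> A j; F i v = F j w\<rbrakk> \<Longrightarrow> F' i v = F' j w"
    for F F' :: "'i \<Rightarrow> 'v \<Rightarrow> 'w"
  proof (intro exI ballI)
    fix i v assume i: "i \<in> I" and v: "v \<in> A i"
    show "(SOME u'. \<exists>j\<in>I. \<exists>w\<in>A j. F i v = F j w \<and> u' = F' j w) = F' i v"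
    proof (rule someI2[where a = "F' i v"])
      show "\<exists>j\<in>I. \<exists>w\<in>A j. F i v = F j w \<and> F' i v = F' j w"
        using i v by blast
    next
      fix u' assume "\<exists>j\<in>I. \<exists>w\<in>A j. F i v = F j w \<and> u' = F' j w"
      then obtain j w where "j \<in> I" "w \<in> A j" "F i v = F j w" "u' = F' j w"
        by blast
      then show "u' = F' i v"
        using same[OF i _ v] by simp
    qed
  qed
  have "\<exists>\<phi>. \<forall>i\<in>I. \<forall>v\<in>A i. \<phi> (F i v) = F' i v"
    by (rule transfer) (use assms in blast)
  then obtain \<phi> where \<phi>: "\<forall>i\<in>I. \<forall>v\<in>A i. \<phi> (F i v) = F' i v" ..
  have "\<exists>\<psi>. \<forall>i\<in>I. \<forall>v\<in>A i. \<psi> (F' i v) = F i v"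
    by (rule transfer) (use assms in blast)
  then obtain \<psi> where \<psi>: "\<forall>i\<in>I. \<forall>v\<in>A i. \<psi> (F' i v) = F i v" ..
  have "bij_betw \<phi> (\<Union>i\<in>I. F i ` A i) (\<Union>i\<in>I. F' i ` A i)"
    by (rule bij_betw_byWitness[where f' = \<psi>]) (use \<phi> \<psi> in auto)
  with \<phi> show ?thesis
    by blast
qed

lemma glued_ex_bij:
  assumes K: "glued I Gs K F P" and K': "glued I Gs K' F' P'" and wf: "\<forall>i\<in>I. wf_cgraph ar (Gs i)"
  obtains \<phi> \<psi> where "bij_betw \<phi> (verts K) (verts K')" and "bij_betw \<psi> (edges K) (edges K')"
    and "\<forall>i\<in>I. \<forall>v\<in>verts (Gs i). \<phi> (F i v) = F' i v"
    and "\<forall>e\<in>edges K. lab K' (\<psi> e) = lab K e \<and> att K' (\<psi> e) = map \<phi> (att K e)"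
proof -
  have "\<forall>i\<in>I. \<forall>j\<in>I. \<forall>v\<in>verts (Gs i). \<forall>w\<in>verts (Gs j). F i v = F j w \<longleftrightarrow> F' i v = F' j w"
    using glued_vert_eq_iff[OF K] glued_vert_eq_iff[OF K'] by blast
  from ex_bij_betw_UN_images[OF this]
  obtain \<phi> where \<phi>: "bij_betw \<phi> (verts K) (verts K')" "\<forall>i\<in>I. \<forall>v\<in>verts (Gs i). \<phi> (F i v) = F' i v"
    unfolding glued_verts[OF K, symmetric] glued_verts[OF K', symmetric] by blast
  have "\<forall>i\<in>I. \<forall>j\<in>I. \<forall>e\<in>edges (Gs i). \<forall>e'\<in>edges (Gs j). P i e = P j e' \<longleftrightarrow> P' i e = P' j e'"
    using glued_edge_eq_iff[OF K] glued_edge_eq_iff[OF K'] by blast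
  from ex_bij_betw_UN_images[OF this]
  obtain \<psi> where \<psi>: "bij_betw \<psi> (edges K) (edges K')" "\<forall>i\<in>I. \<forall>e\<in>edges (Gs i). \<psi> (P i e) = P' i e"
    unfolding glued_edges[OF K, symmetric] glued_edges[OF K', symmetric] by blast
  have "\<forall>e\<in>edges K. lab K' (\<psi> e) = lab K e \<and> att K' (\<psi> e) = map \<phi> (att K e)"
  proof
    fix e assume "e \<in> edges K"
    obtain i e0 where i: "i \<in> I" and e0: "e0 \<in> edges (Gs i)" and e: "e = P i e0"
      using \<open>e \<in> edges K\<close> glued_edges[OF K] by blast
    have "map \<phi> (att K e) = map (\<lambda>v. \<phi> (F i v)) (att (Gs i) e0)"
      using glued_att[OF K i e0] e by simp
    also have "\<dots> = map (F' i) (att (Gs i) e0)"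
      using wf_cgraph_att_verts[OF wf[rule_format, OF i] e0] i \<phi>(2) by (intro map_cong) auto
    finally show "lab K' (\<psi> e) = lab K e \<and> att K' (\<psi> e) = map \<phi> (att K e)"
      using glued_lab[OF K i e0] glued_lab[OF K' i e0] glued_att[OF K' i e0] \<psi>(2) i e0 e by simp
  qed
  with \<phi> \<psi> show thesis
    by (intro that)
qed

lemma glued_cg_iso:
  assumes K: "glued I Gs K F P" "glued_sources I Gs K F"
    and K': "glued I Gs K' F' P'" "glued_sources I Gs K' F'"
    and wf: "\<forall>i\<in>I. wf_cgraph ar (Gs i)"
  shows "cg_iso K K'"
proof -
  obtain \<phi> \<psi> where \<phi>\<psi>: "bij_betw \<phi> (verts K) (verts K')" "bij_betw \<psi> (edges K) (edges K')"
    "\<forall>i\<in>I. \<forall>v\<in>verts (Gs i). \<phi> (F i v) = F' i v"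
    "\<forall>e\<in>edges K. lab K' (\<psi> e) = lab K e \<and> att K' (\<psi> e) = map \<phi> (att K e)"
    using glued_ex_bij[OF K(1) K'(1) wf] by blast
  have "src K' s = map_option \<phi> (src K s)" for s
  proof (cases "\<exists>i\<in>I. src (Gs i) s \<noteq> None")
    case True
    then obtain i v where i: "i \<in> I" and v: "src (Gs i) s = Some v"
      by auto
    then have "v \<in> verts (Gs i)"
      using wf wf_cgraph_src_verts by blast
    then show ?thesis
      using glued_sources_Some[OF K(2) i v] glued_sources_Some[OF K'(2) i v] \<phi>\<psi>(3) i by simp
  next
    case False
    then show ?thesis
      using glued_sources_None[OF K(2)] glued_sources_None[OF K'(2)] by simp
  qed
  with \<phi>\<psi> have "cg_iso_by K K' \<phi> \<psi>"
    by (simp add: cg_iso_by_def)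
  then show ?thesis
    unfolding cg_iso_iff_cg_iso_by by blast
qed

lemma glued_cg_iso_unsourced:
  assumes K: "glued I Gs K F P" and K': "glued I Gs K' F' P'" and wf: "\<forall>i\<in>I. wf_cgraph ar (Gs i)"
  shows "cg_iso (c_restrict {} K) (c_restrict {} K')"
proof -
  obtain \<phi> \<psi> where "bij_betw \<phi> (verts K) (verts K')" "bij_betw \<psi> (edges K) (edges K')"
    "\<forall>e\<in>edges K. lab K' (\<psi> e) = lab K e \<and> att K' (\<psi> e) = map \<phi> (att K e)"
    by (rule glued_ex_bij[OF K K' wf])
  then have "cg_iso_by (c_restrict {} K) (c_restrict {} K') \<phi> \<psi>"
    unfolding cg_iso_by_def by simp
  then show ?thesis
    unfolding cg_iso_iff_cg_iso_by by blast
qed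

lemma inj_on_glued_src:
  assumes K: "glued I Gs K F P" "glued_sources I Gs K F" and wf: "\<forall>i\<in>I. wf_cgraph ar (Gs i)"
  shows "inj_on (src K) (dom (src K))"
proof (rule inj_onI)
  fix s t assume "s \<in> dom (src K)" and st: "src K s = src K t"
  then obtain u where "src K s = Some u"
    by blast
  with K(2) obtain i v where i: "i \<in> I" and v: "src (Gs i) s = Some v"
    by (rule glued_sourcesE)
  have "v \<in> verts (Gs i)"
    using wf i v wf_cgraph_src_verts by blast
  then have "src (Gs i) t = Some v"
    using glued_src_iff[OF K wf i] glued_sources_Some[OF K(2) i v] st by simp
  then show "s = t"
    using wf i v wf_cgraph_src_inj by blast
qed

lemma wf_glued:
  assumes K: "glued I Gs K F P" "glued_sources I Gs K F"
    and wf: "\<forall>i\<in>I. wf_cgraph ar (Gs i)" and "finite I"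
  shows "wf_cgraph ar K"
proof -
  have fin: "finite (verts (Gs i))" "finite (edges (Gs i))" "finite (dom (src (Gs i)))" if "i \<in> I" for i
    using wf that unfolding wf_cgraph_def by blast+
  have "finite (verts K)" "finite (edges K)"
    unfolding glued_verts[OF K(1)] glued_edges[OF K(1)] using \<open>finite I\<close> fin by auto
  moreover have "length (att K e) = ar (lab K e) \<and> set (att K e) \<subseteq> verts K" if "e \<in> edges K" for e
  proof -
    from that obtain i e0 where i: "i \<in> I" and e0: "e0 \<in> edges (Gs i)" and e: "e = P i e0"
      unfolding glued_edges[OF K(1)] by blast
    have "F i ` verts (Gs i) \<subseteq> verts K"
      using glued_verts[OF K(1)] i by blast
    moreover have "length (att (Gs i) e0) = ar (lab (Gs i) e0)" "set (att (Gs i) e0) \<subseteq> verts (Gs i)"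
      using wf_cgraph_att_length[of ar "Gs i"] wf_cgraph_att_verts[of ar "Gs i"] wf i e0 by blast+
    ultimately show ?thesis
      using glued_lab[OF K(1) i e0] glued_att[OF K(1) i e0] e by auto
  qed
  moreover have "dom (src K) \<subseteq> (\<Union>i\<in>I. dom (src (Gs i)))"
  proof
    fix s assume "s \<in> dom (src K)"
    then obtain u where "src K s = Some u"
      by blast
    with K(2) show "s \<in> (\<Union>i\<in>I. dom (src (Gs i)))"
      by (rule glued_sourcesE) blast
  qed
  then have "finite (dom (src K))"
    by (rule finite_subset) (use \<open>finite I\<close> fin in blast)
  moreover have "inj_on (src K) (dom (src K))"
    using K wf by (rule inj_on_glued_src)
  moreover have "ran (src K) \<subseteq> verts K"
  proof
    fix x assume "x \<in> ran (src K)"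
    then obtain s where s: "src K s = Some x"
      by (auto simp: ran_def)
    then obtain i v where i: "i \<in> I" and v: "src (Gs i) s = Some v"
      using K(2) glued_sourcesE by metis
    have "x = F i v"
      using glued_sources_Some[OF K(2) i v] s by simp
    moreover have "v \<in> verts (Gs i)"
      using wf_cgraph_src_verts[of ar "Gs i"] wf i v by blast
    ultimately show "x \<in> verts K"
      using glued_verts[OF K(1)] i by blast
  qed
  ultimately show ?thesis
    unfolding wf_cgraph_def by blast
qed

lemma glued_reindex:
  assumes K: "glued I Gs K F P" and \<pi>: "bij_betw \<pi> J I"
    and Gs': "\<And>j. j \<in> J \<Longrightarrow> Gs' j = Gs (\<pi> j) \<and> F' j = F (\<pi> j) \<and> P' j = P (\<pi> j)"
  shows "glued J Gs' K F' P'"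
proof -
  have \<pi>J: "\<pi> j \<in> I" if "j \<in> J" for j
    using \<pi> that by (auto simp: bij_betw_def)
  have inj: "\<pi> j = \<pi> j' \<longleftrightarrow> j = j'" if "j \<in> J" "j' \<in> J" for j j'
    using \<pi> that by (auto simp: bij_betw_def inj_on_def)
  have U: "(\<Union>i\<in>I. X i) = (\<Union>j\<in>J. X (\<pi> j))" for X :: "nat \<Rightarrow> nat set"
    using \<pi> by (auto simp: bij_betw_def)
  show ?thesis
    unfolding glued_def
  proof (intro conjI ballI)
    show "verts K = (\<Union>j\<in>J. F' j ` verts (Gs' j))"
      using glued_verts[OF K] U[of "\<lambda>i. F i ` verts (Gs i)"] Gs' by simp
    show "edges K = (\<Union>j\<in>J. P' j ` edges (Gs' j))"
      using glued_edges[OF K] U[of "\<lambda>i. P i ` edges (Gs i)"] Gs' by simp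
  next
    fix j j' v w assume "j \<in> J" "j' \<in> J" "v \<in> verts (Gs' j)" "w \<in> verts (Gs' j')"
    then show "F' j v = F' j' w \<longleftrightarrow> (j = j' \<and> v = w) \<or> (v, w) \<in> src_match (Gs' j) (Gs' j')"
      using glued_vert_eq_iff[OF K \<pi>J \<pi>J] inj Gs' by simp
  next
    fix j j' e e' assume "j \<in> J" "j' \<in> J" "e \<in> edges (Gs' j)" "e' \<in> edges (Gs' j')"
    then show "P' j e = P' j' e' \<longleftrightarrow> j = j' \<and> e = e'"
      using glued_edge_eq_iff[OF K \<pi>J \<pi>J] inj Gs' by simp
  next
    fix j e assume "j \<in> J" "e \<in> edges (Gs' j)"
    then show "lab K (P' j e) = lab (Gs' j) e" and "att K (P' j e) = map (F' j) (att (Gs' j) e)"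
      using glued_lab[OF K \<pi>J] glued_att[OF K \<pi>J] Gs' by simp_all
  qed
qed

lemma glued_sources_reindex:
  assumes K: "glued_sources I Gs K F" and \<pi>: "bij_betw \<pi> J I"
    and Gs': "\<And>j. j \<in> J \<Longrightarrow> Gs' j = Gs (\<pi> j) \<and> F' j = F (\<pi> j)"
  shows "glued_sources J Gs' K F'"
  unfolding glued_sources_def
proof (intro conjI allI ballI impI)
  fix s j v assume "j \<in> J" and "src (Gs' j) s = Some v"
  then show "src K s = Some (F' j v)"
    using glued_sources_Some[OF K] \<pi> Gs' by (auto simp: bij_betw_def)
next
  fix s assume none: "\<forall>j\<in>J. src (Gs' j) s = None"
  have "src (Gs i) s = None" if "i \<in> I" for i
  proof -
    obtain j where "j \<in> J" "i = \<pi> j"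
      using \<pi> \<open>i \<in> I\<close> by (auto simp: bij_betw_def)
    then show ?thesis
      using none Gs' by simp
  qed
  then show "src K s = None"
    by (rule glued_sources_None[OF K])
qed

lemma cg_iso_by_src_iff:
  assumes "cg_iso_by G' G f g" and "wf_cgraph ar G'" and "v \<in> verts G'"
  shows "src G s = Some (f v) \<longleftrightarrow> src G' s = Some v"
proof -
  have src: "src G s = map_option f (src G' s)" and inj: "inj_on f (verts G')"
    using assms(1) unfolding cg_iso_by_def bij_betw_def by auto
  show ?thesis
  proof (cases "src G' s")
    case (Some v')
    then have "v' \<in> verts G'"
      using assms(2) wf_cgraph_src_verts by blast
    then show ?thesis
      using src Some inj assms(3) by (auto simp: inj_on_def)
  qed (simp add: src)
qed

lemma glued_cg_iso_by:
  assumes K: "glued I Gs K F P" and iso: "\<And>i. i \<in> I \<Longrightarrow> cg_iso_by (Gs' i) (Gs i) (f i) (g i)"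
    and wf: "\<And>i. i \<in> I \<Longrightarrow> wf_cgraph ar (Gs' i)"
  shows "glued I Gs' K (\<lambda>i. F i \<circ> f i) (\<lambda>i. P i \<circ> g i)"
proof -
  have f: "bij_betw (f i) (verts (Gs' i)) (verts (Gs i))"
    and g: "bij_betw (g i) (edges (Gs' i)) (edges (Gs i))"
    and edge: "\<And>e. e \<in> edges (Gs' i) \<Longrightarrow>
      lab (Gs i) (g i e) = lab (Gs' i) e \<and> att (Gs i) (g i e) = map (f i) (att (Gs' i) e)"
    if "i \<in> I" for i
    using iso[OF that] unfolding cg_iso_by_def by auto
  have match: "(f i v, f j w) \<in> src_match (Gs i) (Gs j) \<longleftrightarrow> (v, w) \<in> src_match (Gs' i) (Gs' j)"
    if "i \<in> I" "j \<in> I" "v \<in> verts (Gs' i)" "w \<in> verts (Gs' j)" for i j v w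
    using cg_iso_by_src_iff[OF iso wf] that by (simp add: src_match_def)
  show ?thesis
    unfolding glued_def
  proof (intro conjI ballI)
    show "verts K = (\<Union>i\<in>I. (F i \<circ> f i) ` verts (Gs' i))"
      unfolding glued_verts[OF K] image_comp[symmetric] using f by (simp add: bij_betw_def)
    show "edges K = (\<Union>i\<in>I. (P i \<circ> g i) ` edges (Gs' i))"
      unfolding glued_edges[OF K] image_comp[symmetric] using g by (simp add: bij_betw_def)
  next
    fix i j v w assume i: "i \<in> I" and j: "j \<in> I" and v: "v \<in> verts (Gs' i)" and w: "w \<in> verts (Gs' j)"
    have "f i v \<in> verts (Gs i)" "f j w \<in> verts (Gs j)"
      using f[OF i] f[OF j] v w by (auto simp: bij_betw_def)
    moreover have "i = j \<Longrightarrow> f i v = f j w \<longleftrightarrow> v = w"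
      using f[OF i] v w by (auto simp: bij_betw_def inj_on_def)
    ultimately show "(F i \<circ> f i) v = (F j \<circ> f j) w \<longleftrightarrow>
        (i = j \<and> v = w) \<or> (v, w) \<in> src_match (Gs' i) (Gs' j)"
      using glued_vert_eq_iff[OF K i j] match[OF i j v w] by auto
  next
    fix i j e e' assume i: "i \<in> I" and j: "j \<in> I" and e: "e \<in> edges (Gs' i)" and e': "e' \<in> edges (Gs' j)"
    have "g i e \<in> edges (Gs i)" "g j e' \<in> edges (Gs j)"
      using g[OF i] g[OF j] e e' by (auto simp: bij_betw_def)
    moreover have "i = j \<Longrightarrow> g i e = g j e' \<longleftrightarrow> e = e'"
      using g[OF i] e e' by (auto simp: bij_betw_def inj_on_def)
    ultimately show "(P i \<circ> g i) e = (P j \<circ> g j) e' \<longleftrightarrow> i = j \<and> e = e'"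
      using glued_edge_eq_iff[OF K i j] by auto
  next
    fix i e assume i: "i \<in> I" and e: "e \<in> edges (Gs' i)"
    then have "g i e \<in> edges (Gs i)"
      using g[OF i] by (auto simp: bij_betw_def)
    then show "lab K ((P i \<circ> g i) e) = lab (Gs' i) e"
      and "att K ((P i \<circ> g i) e) = map (F i \<circ> f i) (att (Gs' i) e)"
      using glued_lab[OF K i] glued_att[OF K i] edge[OF i e] by simp_all
  qed
qed

lemma glued_sources_cg_iso_by:
  assumes K: "glued_sources I Gs K F" and iso: "\<And>i. i \<in> I \<Longrightarrow> cg_iso_by (Gs' i) (Gs i) (f i) (g i)"
  shows "glued_sources I Gs' K (\<lambda>i. F i \<circ> f i)"
proof -
  have src: "src (Gs i) s = map_option (f i) (src (Gs' i) s)" if "i \<in> I" for i s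
    using iso[OF that] unfolding cg_iso_by_def by auto
  show ?thesis
    using K unfolding glued_sources_def by (simp add: src)
qed

lemma glued_same_src_match:
  assumes K: "glued I Gs K F P"
    and same: "\<And>i. i \<in> I \<Longrightarrow> c_restrict {} (Gs' i) = c_restrict {} (Gs i)"
    and match: "\<And>i j. \<lbrakk>i \<in> I; j \<in> I; i \<noteq> j\<rbrakk> \<Longrightarrow> src_match (Gs' i) (Gs' j) = src_match (Gs i) (Gs j)"
  shows "glued I Gs' K F P"
proof -
  have "F i v = F j w \<longleftrightarrow> (i = j \<and> v = w) \<or> (v, w) \<in> src_match (Gs' i) (Gs' j)"
    if "i \<in> I" "j \<in> I" "v \<in> verts (Gs' i)" "w \<in> verts (Gs' j)" for i j v w
    using glued_vert_eq_iff[OF K that(1,2)] that same[of i] same[of j] match[OF that(1,2)]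
    by (cases "i = j") (auto simp: c_restrict_empty_eq_iff)
  with K same show ?thesis
    unfolding glued_def by (simp add: c_restrict_empty_eq_iff)
qed

lemma glued_src_match_iff:
  assumes "glued I Gs M F P" and "glued_sources I Gs M F" and "\<forall>i\<in>I. wf_cgraph ar (Gs i)"
    and "i \<in> I" and "v \<in> verts (Gs i)"
  shows "(F i v, w) \<in> src_match M H \<longleftrightarrow> (v, w) \<in> src_match (Gs i) H"
    and "(w, F i v) \<in> src_match H M \<longleftrightarrow> (w, v) \<in> src_match H (Gs i)"
  using glued_src_iff[OF assms] by (auto simp: src_match_def)

definition fam2 :: "'b \<Rightarrow> 'b \<Rightarrow> nat \<Rightarrow> 'b" where
  "fam2 a b i = (if i = 0 then a else b)"

definition fam3 :: "'b \<Rightarrow> 'b \<Rightarrow> 'b \<Rightarrow> nat \<Rightarrow> 'b" where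
  "fam3 a b c i = (if i = 0 then a else if i = 1 then b else c)"

lemma fam2_simps [simp]: "fam2 a b 0 = a" "fam2 a b 1 = b" "fam2 a b (Suc 0) = b"
  by (simp_all add: fam2_def)

lemma fam3_simps [simp]: "fam3 a b c 0 = a" "fam3 a b c 1 = b" "fam3 a b c (Suc 0) = b" "fam3 a b c 2 = c"
  by (simp_all add: fam3_def)

lemma glued_flatten:
  assumes K: "glued {0, 1} (fam2 M J) K F P"
    and M: "glued {0, 1} (fam2 G H) M F1 P1" "glued_sources {0, 1} (fam2 G H) M F1"
    and wf: "wf_cgraph ar G" "wf_cgraph ar H"
  shows "glued {0, 1, 2} (fam3 G H J) K (fam3 (F 0 \<circ> F1 0) (F 0 \<circ> F1 1) (F 1))
    (fam3 (P 0 \<circ> P1 0) (P 0 \<circ> P1 1) (P 1))"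
proof -
  have wfM: "\<forall>i\<in>{0, 1}. wf_cgraph ar (fam2 G H i)"
    using wf by simp
  have in_M: "v \<in> verts G \<Longrightarrow> F1 0 v \<in> verts M" "v \<in> verts H \<Longrightarrow> F1 1 v \<in> verts M"
    "e \<in> edges G \<Longrightarrow> P1 0 e \<in> edges M" "e \<in> edges H \<Longrightarrow> P1 1 e \<in> edges M" for v e
    unfolding glued_verts[OF M(1)] glued_edges[OF M(1)] by auto
  note facts = in_M glued_src_match_iff[OF M wfM]
    glued_vert_eq_iff[OF K] glued_vert_eq_iff[OF M(1)]
    glued_edge_eq_iff[OF K] glued_edge_eq_iff[OF M(1)]
    glued_lab[OF K] glued_lab[OF M(1)] glued_att[OF K] glued_att[OF M(1)]
  note facts = facts[unfolded One_nat_def]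
  have I3: "i \<in> {0, 1, 2} \<longleftrightarrow> i = 0 \<or> i = 1 \<or> i = 2" for i :: nat
    by auto
  show ?thesis
    unfolding glued_def
  proof (intro conjI ballI)
    show "verts K = (\<Union>i\<in>{0, 1, 2}. fam3 (F 0 \<circ> F1 0) (F 0 \<circ> F1 1) (F 1) i ` verts (fam3 G H J i))"
      by (simp add: glued_verts[OF K] glued_verts[OF M(1)] image_Un image_comp Un_assoc)
    show "edges K = (\<Union>i\<in>{0, 1, 2}. fam3 (P 0 \<circ> P1 0) (P 0 \<circ> P1 1) (P 1) i ` edges (fam3 G H J i))"
      by (simp add: glued_edges[OF K] glued_edges[OF M(1)] image_Un image_comp Un_assoc)
  next
    fix i j v w assume "i \<in> {0, 1, 2}" "j \<in> {0, 1, 2}" "v \<in> verts (fam3 G H J i)" "w \<in> verts (fam3 G H J j)"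
    then show "fam3 (F 0 \<circ> F1 0) (F 0 \<circ> F1 1) (F 1) i v = fam3 (F 0 \<circ> F1 0) (F 0 \<circ> F1 1) (F 1) j w \<longleftrightarrow>
        (i = j \<and> v = w) \<or> (v, w) \<in> src_match (fam3 G H J i) (fam3 G H J j)"
      unfolding I3 by (elim disjE) (simp_all add: facts)
  next
    fix i j e e' assume "i \<in> {0, 1, 2}" "j \<in> {0, 1, 2}" "e \<in> edges (fam3 G H J i)" "e' \<in> edges (fam3 G H J j)"
    then show "fam3 (P 0 \<circ> P1 0) (P 0 \<circ> P1 1) (P 1) i e = fam3 (P 0 \<circ> P1 0) (P 0 \<circ> P1 1) (P 1) j e' \<longleftrightarrow>
        i = j \<and> e = e'"
      unfolding I3 by (elim disjE) (simp_all add: facts)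
  next
    fix i e assume "i \<in> {0, 1, 2}" "e \<in> edges (fam3 G H J i)"
    then show "lab K (fam3 (P 0 \<circ> P1 0) (P 0 \<circ> P1 1) (P 1) i e) = lab (fam3 G H J i) e"
      and "att K (fam3 (P 0 \<circ> P1 0) (P 0 \<circ> P1 1) (P 1) i e) =
        map (fam3 (F 0 \<circ> F1 0) (F 0 \<circ> F1 1) (F 1) i) (att (fam3 G H J i) e)"
      unfolding I3 by (elim disjE; simp add: facts)+
  qed
qed

lemma glued_sources_flatten:
  assumes K: "glued_sources {0, 1} (fam2 M J) K F" and M: "glued_sources {0, 1} (fam2 G H) M F1"
  shows "glued_sources {0, 1, 2} (fam3 G H J) K (fam3 (F 0 \<circ> F1 0) (F 0 \<circ> F1 1) (F 1))"
  unfolding glued_sources_def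
proof (intro conjI allI ballI impI)
  fix s i v assume "i \<in> {0, 1, 2}" and v: "src (fam3 G H J i) s = Some v"
  then consider "i = 0" | "i = 1" | "i = 2"
    by auto
  then show "src K s = Some (fam3 (F 0 \<circ> F1 0) (F 0 \<circ> F1 1) (F 1) i v)"
  proof cases
    case 1
    then show ?thesis
      using v glued_sources_Some[OF M, of 0] glued_sources_Some[OF K, of 0] by simp
  next
    case 2
    then show ?thesis
      using v glued_sources_Some[OF M, of 1] glued_sources_Some[OF K, of 0] by simp
  next
    case 3
    then show ?thesis
      using v glued_sources_Some[OF K, of 1] by simp
  qed
next
  fix s assume "\<forall>i\<in>{0, 1, 2}. src (fam3 G H J i) s = None"
  then have "src M s = None" and "src J s = None"
    by (auto intro!: glued_sources_None[OF M])
  then show "src K s = None"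
    by (auto intro!: glued_sources_None[OF K])
qed

section \<open>Parallel composition of concrete graphs\<close>

lemma par_vmap_source:
  assumes "wf_cgraph ar H" and "src G s = Some u" and "src H s = Some v"
  shows "par_vmap G H v = 2 * u"
proof -
  have ex: "\<exists>s. src H s = Some v \<and> s \<in> dom (src G)"
    using assms(2,3) by blast
  then have "src H (SOME s. src H s = Some v \<and> s \<in> dom (src G)) = Some v"
    by (rule someI2_ex) blast
  then have "(SOME s. src H s = Some v \<and> s \<in> dom (src G)) = s"
    using wf_cgraph_src_inj[OF assms(1)] assms(3) by blast
  then show ?thesis
    using ex assms(2) unfolding par_vmap_def by simp
qed

lemma par_vmap_other:
  assumes "\<not> (\<exists>s. src H s = Some v \<and> s \<in> dom (src G))"
  shows "par_vmap G H v = 2 * v + 1"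
  unfolding par_vmap_def by (rule if_not_P[OF assms])

lemma par_vmap_cases:
  assumes "wf_cgraph ar H"
  obtains s u where "src G s = Some u" and "src H s = Some v" and "par_vmap G H v = 2 * u"
    | "\<forall>s. src H s = Some v \<longrightarrow> src G s = None" and "par_vmap G H v = 2 * v + 1"
  using par_vmap_source[OF assms] par_vmap_other by (metis domIff not_None_eq)

lemma double_eq_par_vmap_iff:
  assumes "wf_cgraph ar H"
  shows "2 * u = par_vmap G H w \<longleftrightarrow> (u, w) \<in> src_match G H"
proof (rule par_vmap_cases[OF assms, of G w])
  fix s u0 assume s: "src G s = Some u0" "src H s = Some w" "par_vmap G H w = 2 * u0"
  have "(u, w) \<in> src_match G H \<longleftrightarrow> u = u0"
  proof
    assume "(u, w) \<in> src_match G H"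
    then obtain t where "src G t = Some u" "src H t = Some w"
      by (auto simp: src_match_def)
    with s show "u = u0"
      using wf_cgraph_src_inj[OF assms, of t w s] by simp
  qed (use s in \<open>auto simp: src_match_def\<close>)
  then show ?thesis
    using s(3) by simp
next
  assume "\<forall>s. src H s = Some w \<longrightarrow> src G s = None" "par_vmap G H w = 2 * w + 1"
  moreover have "2 * u \<noteq> 2 * w + 1"
    by presburger
  ultimately show ?thesis
    by (auto simp: src_match_def)
qed

lemma par_vmap_eq_iff:
  assumes "wf_cgraph ar G" and "wf_cgraph ar H"
  shows "par_vmap G H v = par_vmap G H w \<longleftrightarrow> v = w"
proof
  assume eq: "par_vmap G H v = par_vmap G H w"
  show "v = w"
  proof (rule par_vmap_cases[OF assms(2), of G v])
    fix s u assume source: "src G s = Some u" "src H s = Some v" "par_vmap G H v = 2 * u"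
    with eq have "(u, w) \<in> src_match G H"
      using double_eq_par_vmap_iff[OF assms(2)] by simp
    then obtain t where "src G t = Some u" "src H t = Some w"
      by (auto simp: src_match_def)
    with source show ?thesis
      using wf_cgraph_src_inj[OF assms(1), of s u t] by simp
  next
    assume v: "par_vmap G H v = 2 * v + 1"
    show ?thesis
    proof (rule par_vmap_cases[OF assms(2), of G w])
      fix s u assume "par_vmap G H w = 2 * u"
      then show ?thesis
        using eq v by presburger
    next
      assume "par_vmap G H w = 2 * w + 1"
      then show ?thesis
        using eq v by simp
    qed
  qed
qed simp

lemma c_par_glued:
  assumes wf: "wf_cgraph ar G" "wf_cgraph ar H"
  shows "glued {0, 1} (fam2 G H) (c_par G H) (fam2 (\<lambda>v. 2 * v) (par_vmap G H)) (fam2 (\<lambda>e. 2 * e) (\<lambda>e. 2 * e + 1))"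
    and "glued_sources {0, 1} (fam2 G H) (c_par G H) (fam2 (\<lambda>v. 2 * v) (par_vmap G H))"
proof -
  have "par_vmap G H w = 2 * u \<longleftrightarrow> (w, u) \<in> src_match H G" for u w
    using double_eq_par_vmap_iff[OF wf(2)] src_match_converse[of H G] by (metis converse_iff)
  moreover have "2 * a \<noteq> Suc (2 * b)" "Suc (2 * b) \<noteq> 2 * a" for a b :: nat
    by presburger+
  ultimately show "glued {0, 1} (fam2 G H) (c_par G H) (fam2 (\<lambda>v. 2 * v) (par_vmap G H))
      (fam2 (\<lambda>e. 2 * e) (\<lambda>e. 2 * e + 1))"
    unfolding glued_def
    by (simp add: c_par_def double_eq_par_vmap_iff[OF wf(2)] par_vmap_eq_iff[OF wf])
  show "glued_sources {0, 1} (fam2 G H) (c_par G H) (fam2 (\<lambda>v. 2 * v) (par_vmap G H))"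
    unfolding glued_sources_def
    using par_vmap_source[OF wf(2)] by (auto simp: c_par_def split: option.split)
qed

lemma wf_c_par:
  assumes "wf_cgraph ar G" and "wf_cgraph ar H"
  shows "wf_cgraph ar (c_par G H)"
  using wf_glued[OF c_par_glued[OF assms]] assms by simp

lemma c_par_comm:
  assumes "wf_cgraph ar G" and "wf_cgraph ar H"
  shows "cg_iso (c_par G H) (c_par H G)"
proof -
  have swap: "bij_betw (\<lambda>i::nat. 1 - i) {0, 1} {0, 1}"
    by (auto simp: bij_betw_def inj_on_def)
  note GH = c_par_glued[OF assms]
  have "glued {0, 1} (fam2 H G) (c_par G H) (\<lambda>i. fam2 (\<lambda>v. 2 * v) (par_vmap G H) (1 - i))
      (\<lambda>i. fam2 (\<lambda>e. 2 * e) (\<lambda>e. 2 * e + 1) (1 - i))"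
    by (rule glued_reindex[OF GH(1) swap]) auto
  moreover have "glued_sources {0, 1} (fam2 H G) (c_par G H) (\<lambda>i. fam2 (\<lambda>v. 2 * v) (par_vmap G H) (1 - i))"
    by (rule glued_sources_reindex[OF GH(2) swap]) auto
  ultimately show ?thesis
    using c_par_glued[OF assms(2,1)] assms by (intro glued_cg_iso) auto
qed

lemma c_par_cong:
  assumes wf: "wf_cgraph ar G" "wf_cgraph ar H" "wf_cgraph ar G'" "wf_cgraph ar H'"
    and "cg_iso G G'" and "cg_iso H H'"
  shows "cg_iso (c_par G H) (c_par G' H')"
proof -
  obtain f g where "cg_iso_by G' G f g"
    using cg_iso_sym[OF wf(1) \<open>cg_iso G G'\<close>] unfolding cg_iso_iff_cg_iso_by by blast
  moreover obtain f' g' where "cg_iso_by H' H f' g'"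
    using cg_iso_sym[OF wf(2) \<open>cg_iso H H'\<close>] unfolding cg_iso_iff_cg_iso_by by blast
  ultimately have iso: "\<And>i. i \<in> {0, 1} \<Longrightarrow> cg_iso_by (fam2 G' H' i) (fam2 G H i) (fam2 f f' i) (fam2 g g' i)"
    by auto
  have wf': "\<And>i. i \<in> {0, 1} \<Longrightarrow> wf_cgraph ar (fam2 G' H' i)"
    using wf by auto
  note GH = c_par_glued[OF wf(1,2)]
  show ?thesis
    using glued_cg_iso_by[OF GH(1) iso wf'] glued_sources_cg_iso_by[OF GH(2) iso] c_par_glued[OF wf(3,4)] wf'
    by (intro glued_cg_iso) auto
qed

lemma c_par_assoc:
  assumes wf: "wf_cgraph ar G" "wf_cgraph ar H" "wf_cgraph ar J"
  shows "cg_iso (c_par (c_par G H) J) (c_par G (c_par H J))"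
proof -
  have wf_GH: "wf_cgraph ar (c_par G H)" and wf_HJ: "wf_cgraph ar (c_par H J)"
    using wf by (simp_all add: wf_c_par)
  have wf3: "\<forall>i\<in>{0, 1, 2}. wf_cgraph ar (fam3 G H J i)"
    using wf by auto
  have left: "\<exists>F P. glued {0, 1, 2} (fam3 G H J) (c_par (c_par G H) J) F P \<and>
      glued_sources {0, 1, 2} (fam3 G H J) (c_par (c_par G H) J) F"
    using glued_flatten[OF c_par_glued(1)[OF wf_GH wf(3)] c_par_glued[OF wf(1,2)] wf(1,2)]
      glued_sources_flatten[OF c_par_glued(2)[OF wf_GH wf(3)] c_par_glued(2)[OF wf(1,2)]]
    by blast
  define \<pi> where "\<pi> i = (if i = 0 then 2 else i - 1)" for i :: nat
  have \<pi>: "bij_betw \<pi> {0, 1, 2} {0, 1, 2}"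
    unfolding \<pi>_def by (auto simp: bij_betw_def inj_on_def)
  have "\<exists>F P. glued {0, 1, 2} (fam3 H J G) (c_par (c_par H J) G) F P \<and>
      glued_sources {0, 1, 2} (fam3 H J G) (c_par (c_par H J) G) F"
    using glued_flatten[OF c_par_glued(1)[OF wf_HJ wf(1)] c_par_glued[OF wf(2,3)] wf(2,3)]
      glued_sources_flatten[OF c_par_glued(2)[OF wf_HJ wf(1)] c_par_glued(2)[OF wf(2,3)]]
    by blast
  then obtain F P where FP: "glued {0, 1, 2} (fam3 H J G) (c_par (c_par H J) G) F P"
      and F: "glued_sources {0, 1, 2} (fam3 H J G) (c_par (c_par H J) G) F"
    by blast
  have rotate: "fam3 G H J j = fam3 H J G (\<pi> j)" if "j \<in> {0, 1, 2}" for j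
    using that by (auto simp: \<pi>_def)
  have right: "glued {0, 1, 2} (fam3 G H J) (c_par (c_par H J) G) (F \<circ> \<pi>) (P \<circ> \<pi>)"
    by (rule glued_reindex[OF FP \<pi>]) (simp add: rotate)
  have right_sources: "glued_sources {0, 1, 2} (fam3 G H J) (c_par (c_par H J) G) (F \<circ> \<pi>)"
    by (rule glued_sources_reindex[OF F \<pi>]) (simp add: rotate)
  from left obtain F' P' where "glued {0, 1, 2} (fam3 G H J) (c_par (c_par G H) J) F' P'"
      and "glued_sources {0, 1, 2} (fam3 G H J) (c_par (c_par G H) J) F'"
    by blast
  then have "cg_iso (c_par (c_par G H) J) (c_par (c_par H J) G)"
    using right right_sources wf3 by (intro glued_cg_iso)
  also have "cg_iso (c_par (c_par H J) G) (c_par G (c_par H J))"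
    by (rule c_par_comm[OF wf_HJ wf(1)])
  finally show ?thesis .
qed

definition cg_empty :: "'a cgraph" where
  "cg_empty = \<lparr>verts = {}, edges = {}, lab = (\<lambda>_. undefined), att = (\<lambda>_. []), src = Map.empty\<rparr>"

lemma wf_cg_empty: "wf_cgraph ar cg_empty"
  by (simp add: wf_cgraph_def cg_empty_def)

lemma c_par_cg_empty:
  assumes "wf_cgraph ar G"
  shows "cg_iso (c_par G cg_empty) G"
proof -
  have "glued {0, 1} (fam2 G cg_empty) G (fam2 id id) (fam2 id id)"
    by (simp add: glued_def cg_empty_def)
  moreover have "glued_sources {0, 1} (fam2 G cg_empty) G (fam2 id id)"
    by (simp add: glued_sources_def cg_empty_def)
  ultimately show ?thesis
    using c_par_glued[OF assms wf_cg_empty] assms wf_cg_empty by (intro glued_cg_iso) auto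
qed

lemma c_par_unsourced_cong:
  assumes wf: "wf_cgraph ar A" "wf_cgraph ar B" "wf_cgraph ar A'" "wf_cgraph ar B'"
    and "c_restrict {} A' = c_restrict {} A" and "c_restrict {} B' = c_restrict {} B"
    and match: "src_match A' B' = src_match A B"
  shows "cg_iso (c_restrict {} (c_par A' B')) (c_restrict {} (c_par A B))"
proof -
  have "src_match B' A' = src_match B A"
    using match by (simp add: src_match_converse[of B'] src_match_converse[of B])
  then have "glued {0, 1} (fam2 A B) (c_par A' B') (fam2 (\<lambda>v. 2 * v) (par_vmap A' B'))
      (fam2 (\<lambda>e. 2 * e) (\<lambda>e. 2 * e + 1))"
    using assms by (intro glued_same_src_match[OF c_par_glued(1)[OF wf(3,4)]]) auto
  then show ?thesis
    using c_par_glued(1)[OF wf(1,2)] wf by (intro glued_cg_iso_unsourced) auto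
qed

lemma g_par_iso_class:
  assumes "wf_cgraph ar G" and "wf_cgraph ar H"
  shows "g_par ar (iso_class ar G) (iso_class ar H) = iso_class ar (c_par G H)"
proof -
  have "cg_iso (c_par (rep (iso_class ar G)) (rep (iso_class ar H))) (c_par G H)"
    using rep_iso_class[OF assms(1)] rep_iso_class[OF assms(2)] assms
    by (intro c_par_cong) (auto intro: cg_iso_sym)
  then show ?thesis
    unfolding g_par_def by (subst iso_class_eq_iff) (simp_all add: wf_c_par rep_iso_class assms)
qed

lemma
  assumes "x \<in> graphs ar"
  shows g_restrict_in_graphs: "g_restrict ar \<tau> x \<in> graphs ar"
    and gsort_g_restrict: "gsort (g_restrict ar \<tau> x) = gsort x \<inter> \<tau>"
  using assms by (auto elim!: graphsE simp: g_restrict_iso_class graphsI wf_c_restrict gsort_iso_class)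

lemma
  assumes "x \<in> graphs ar" and "bij \<alpha>"
  shows g_rename_in_graphs: "g_rename ar \<alpha> x \<in> graphs ar"
    and gsort_g_rename: "gsort (g_rename ar \<alpha> x) = \<alpha> -` gsort x"
  using assms by (auto elim!: graphsE simp: g_rename_iso_class graphsI wf_c_rename gsort_iso_class)

lemma
  assumes "x \<in> graphs ar" and "y \<in> graphs ar"
  shows g_par_in_graphs: "g_par ar x y \<in> graphs ar"
    and gsort_g_par: "gsort (g_par ar x y) = gsort x \<union> gsort y"
proof -
  obtain G H where "wf_cgraph ar G" "x = iso_class ar G" "wf_cgraph ar H" "y = iso_class ar H"
    using assms by (meson graphsE)
  moreover have "dom (src (c_par G H)) = dom (src G) \<union> dom (src H)"
    by (auto simp: c_par_def split: option.splits)
  ultimately show "g_par ar x y \<in> graphs ar" and "gsort (g_par ar x y) = gsort x \<union> gsort y"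
    by (simp_all add: g_par_iso_class graphsI wf_c_par gsort_iso_class)
qed

lemma g_par_commute:
  assumes "x \<in> graphs ar" and "y \<in> graphs ar"
  shows "g_par ar x y = g_par ar y x"
proof -
  obtain G H where "wf_cgraph ar G" "x = iso_class ar G" "wf_cgraph ar H" "y = iso_class ar H"
    using assms by (meson graphsE)
  then show ?thesis
    by (simp add: g_par_iso_class iso_class_eq_iff wf_c_par c_par_comm)
qed

lemma g_par_assoc:
  assumes "x \<in> graphs ar" and "y \<in> graphs ar" and "z \<in> graphs ar"
  shows "g_par ar (g_par ar x y) z = g_par ar x (g_par ar y z)"
proof -
  obtain G H J where "wf_cgraph ar G" "x = iso_class ar G" "wf_cgraph ar H" "y = iso_class ar H"
    "wf_cgraph ar J" "z = iso_class ar J"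
    using assms by (meson graphsE)
  then show ?thesis
    by (simp add: g_par_iso_class iso_class_eq_iff wf_c_par c_par_assoc)
qed

definition close_with :: "('a \<Rightarrow> nat) \<Rightarrow> 'a cgraph set \<Rightarrow> 'a cgraph set \<Rightarrow> 'a cgraph set" where
  "close_with ar H x = g_restrict ar {} (g_par ar x H)"

lemma close_with_iso_class:
  assumes "wf_cgraph ar X" and "wf_cgraph ar Y"
  shows "close_with ar (iso_class ar Y) (iso_class ar X) = iso_class ar (c_restrict {} (c_par X Y))"
  using assms by (simp add: close_with_def g_par_iso_class g_restrict_iso_class wf_c_par)

lemma close_with_iso_class_eqI:
  assumes wf: "wf_cgraph ar X" "wf_cgraph ar Y" "wf_cgraph ar X'" "wf_cgraph ar Y'"
    and "c_restrict {} X' = c_restrict {} X" and "c_restrict {} Y' = c_restrict {} Y"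
    and "src_match X' Y' = src_match X Y"
  shows "close_with ar (iso_class ar Y') (iso_class ar X') = close_with ar (iso_class ar Y) (iso_class ar X)"
  using c_par_unsourced_cong[OF assms] wf
  by (simp add: close_with_iso_class iso_class_eq_iff wf_c_restrict wf_c_par)

lemma close_with_g_par:
  assumes "x \<in> graphs ar" and "z \<in> graphs ar" and "H \<in> graphs ar"
  shows "close_with ar H (g_par ar x z) = close_with ar (g_par ar z H) x"
  using assms by (simp add: close_with_def g_par_assoc)

lemma close_with_g_rename:
  assumes x: "x \<in> graphs ar" and H: "H \<in> graphs ar" and \<alpha>: "bij \<alpha>"
  shows "close_with ar H (g_rename ar \<alpha> x) = close_with ar (g_rename ar (inv \<alpha>) H) x"
proof -
  obtain X Y where X: "wf_cgraph ar X" "x = iso_class ar X" and Y: "wf_cgraph ar Y" "H = iso_class ar Y"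
    using x H by (meson graphsE)
  have inv: "bij (inv \<alpha>)"
    using \<alpha> by (rule bij_imp_bij_inv)
  have "(\<exists>s. src X (\<alpha> s) = Some v \<and> src Y s = Some w) \<longleftrightarrow>
      (\<exists>t. src X t = Some v \<and> src Y (inv \<alpha> t) = Some w)" for v w
    using \<alpha> by (metis bij_inv_eq_iff)
  then have "src_match (c_rename \<alpha> X) Y = src_match X (c_rename (inv \<alpha>) Y)"
    unfolding src_match_def by simp
  then have "close_with ar (iso_class ar Y) (iso_class ar (c_rename \<alpha> X)) =
      close_with ar (iso_class ar (c_rename (inv \<alpha>) Y)) (iso_class ar X)"
    using X Y \<alpha> inv by (intro close_with_iso_class_eqI) (simp_all add: wf_c_rename)
  then show ?thesis
    using X Y \<alpha> inv by (simp add: g_rename_iso_class)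
qed

lemma close_with_g_restrict:
  assumes x: "x \<in> graphs ar" and H: "H \<in> graphs ar" and \<beta>: "bij \<beta>"
    and fixed: "\<And>s. s \<in> gsort x \<inter> \<tau> \<Longrightarrow> \<beta> s = s"
    and away: "\<beta> ` (gsort x - \<tau>) \<inter> gsort H = {}"
  shows "close_with ar H (g_restrict ar \<tau> x) = close_with ar (g_rename ar \<beta> H) x"
proof -
  obtain X Y where X: "wf_cgraph ar X" "x = iso_class ar X" and Y: "wf_cgraph ar Y" "H = iso_class ar Y"
    using x H by (meson graphsE)
  have dom: "gsort x = dom (src X)" "gsort H = dom (src Y)"
    using X Y by (simp_all add: gsort_iso_class)
  have "src_match (c_restrict \<tau> X) Y = src_match X (c_rename \<beta> Y)"
  proof (intro set_eqI iffI)
    fix p assume "p \<in> src_match (c_restrict \<tau> X) Y"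
    then show "p \<in> src_match X (c_rename \<beta> Y)"
      using fixed unfolding src_match_def dom by (force simp: restrict_map_def split: if_splits)
  next
    fix p assume "p \<in> src_match X (c_rename \<beta> Y)"
    then obtain s v w where p: "p = (v, w)" "src X s = Some v" "src Y (\<beta> s) = Some w"
      by (auto simp: src_match_def)
    then have "s \<in> \<tau>"
      using away unfolding dom by blast
    moreover have "\<beta> s = s"
      using fixed[of s] p(2) \<open>s \<in> \<tau>\<close> unfolding dom by blast
    ultimately show "p \<in> src_match (c_restrict \<tau> X) Y"
      using p unfolding src_match_def by (auto intro!: exI[of _ s])
  qed
  then have "close_with ar (iso_class ar Y) (iso_class ar (c_restrict \<tau> X)) =
      close_with ar (iso_class ar (c_rename \<beta> Y)) (iso_class ar X)"
    using X Y \<beta> by (intro close_with_iso_class_eqI) (simp_all add: wf_c_rename wf_c_restrict)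
  then show ?thesis
    using X Y \<beta> by (simp add: g_rename_iso_class g_restrict_iso_class)
qed

lemma close_with_g_restrict_sort:
  assumes x: "x \<in> graphs ar" and H: "H \<in> graphs ar" and "gsort x \<subseteq> \<sigma>"
  shows "close_with ar H x = close_with ar (g_restrict ar \<sigma> H) x"
proof -
  obtain X Y where X: "wf_cgraph ar X" "x = iso_class ar X" and Y: "wf_cgraph ar Y" "H = iso_class ar Y"
    using x H by (meson graphsE)
  have "dom (src X) \<subseteq> \<sigma>"
    using X assms(3) by (simp add: gsort_iso_class)
  then have "src_match X Y = src_match X (c_restrict \<sigma> Y)"
    unfolding src_match_def by (auto simp: restrict_map_def)
  then have "close_with ar (iso_class ar Y) (iso_class ar X) =
      close_with ar (iso_class ar (c_restrict \<sigma> Y)) (iso_class ar X)"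
    using X Y by (intro close_with_iso_class_eqI) (simp_all add: wf_c_restrict)
  then show ?thesis
    using X Y by (simp add: g_restrict_iso_class)
qed

lemma close_with_cg_empty:
  assumes x: "x \<in> graphs ar" and "gsort x = {}"
  shows "close_with ar (iso_class ar cg_empty) x = x"
proof -
  obtain X where X: "wf_cgraph ar X" "x = iso_class ar X"
    using x by (rule graphsE)
  have "c_restrict {} X = X"
    using X assms(2) by (simp add: gsort_iso_class c_restrict_empty_eq_self)
  then have "cg_iso (c_restrict {} (c_par X cg_empty)) X"
    using cg_iso_c_restrict[OF c_par_cg_empty[OF X(1)], of "{}"] by simp
  then show ?thesis
    using X close_with_iso_class[OF X(1) wf_cg_empty]
    by (simp add: iso_class_eq_iff wf_c_restrict wf_c_par wf_cg_empty)
qed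

section \<open>Congruences and subalgebras\<close>

lemma
  assumes "hr_congruence ar U Rst Perm R"
  shows hr_congruence_equiv: "equiv U R"
    and hr_congruence_gsort: "(x, y) \<in> R \<Longrightarrow> gsort x = gsort y"
    and hr_congruence_g_restrict: "\<tau> \<in> Rst \<Longrightarrow> (x, y) \<in> R \<Longrightarrow> (g_restrict ar \<tau> x, g_restrict ar \<tau> y) \<in> R"
    and hr_congruence_g_rename: "\<alpha> \<in> Perm \<Longrightarrow> (x, y) \<in> R \<Longrightarrow> (g_rename ar \<alpha> x, g_rename ar \<alpha> y) \<in> R"
    and hr_congruence_g_par: "(x, y) \<in> R \<Longrightarrow> (x', y') \<in> R \<Longrightarrow> (g_par ar x x', g_par ar y y') \<in> R"
    and hr_congruence_finite: "finite ({x \<in> U. gsort x = \<sigma>} // R)"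
  using assms unfolding hr_congruence_def by blast+

lemma hr_congruence_Image_sort_class:
  assumes R: "hr_congruence ar U Rst Perm R"
  shows "R `` {x \<in> U. gsort x = \<sigma>} \<subseteq> {x \<in> U. gsort x = \<sigma>}"
proof
  fix y assume "y \<in> R `` {x \<in> U. gsort x = \<sigma>}"
  then obtain x where "x \<in> U" "gsort x = \<sigma>" and xy: "(x, y) \<in> R"
    by blast
  moreover have "y \<in> U"
    using hr_congruence_equiv[OF R] xy by (auto simp: equiv_def refl_on_def)
  ultimately show "y \<in> {x \<in> U. gsort x = \<sigma>}"
    using hr_congruence_gsort[OF R xy] by simp
qed

lemma hr_congruence_subuniverse:
  assumes R: "hr_congruence ar U Rst Perm R" and "U' \<subseteq> U" and "Rst' \<subseteq> Rst" and "Perm' \<subseteq> Perm"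
    and restrict_closed: "\<And>\<tau> x. \<tau> \<in> Rst' \<Longrightarrow> x \<in> U' \<Longrightarrow> g_restrict ar \<tau> x \<in> U'"
    and rename_closed: "\<And>\<alpha> x. \<alpha> \<in> Perm' \<Longrightarrow> x \<in> U' \<Longrightarrow> g_rename ar \<alpha> x \<in> U'"
    and par_closed: "\<And>x y. x \<in> U' \<Longrightarrow> y \<in> U' \<Longrightarrow> g_par ar x y \<in> U'"
    and sort_closed: "\<And>x y. x \<in> U \<Longrightarrow> y \<in> U' \<Longrightarrow> gsort x = gsort y \<Longrightarrow> x \<in> U'"
  shows "hr_congruence ar U' Rst' Perm' (R \<inter> U' \<times> U')"
proof -
  have "refl_on U R" "sym R" "trans R"
    using hr_congruence_equiv[OF R] by (simp_all add: equiv_def)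
  then have equiv: "equiv U' (R \<inter> U' \<times> U')"
    using \<open>U' \<subseteq> U\<close> unfolding equiv_def refl_on_def sym_def trans_def by blast
  have "finite ({x \<in> U'. gsort x = \<sigma>} // (R \<inter> U' \<times> U'))" for \<sigma>
  proof (rule finite_quotient_coarser[OF hr_congruence_equiv[OF R] equiv])
    show "{x \<in> U'. gsort x = \<sigma>} \<subseteq> U"
      using \<open>U' \<subseteq> U\<close> by blast
    have "(x, y) \<in> R \<Longrightarrow> x \<in> U \<and> y \<in> U" for x y
      using hr_congruence_equiv[OF R] by (auto simp: equiv_def refl_on_def)
    then show closed: "R `` {x \<in> U'. gsort x = \<sigma>} \<subseteq> {x \<in> U'. gsort x = \<sigma>}"
      using sort_closed hr_congruence_gsort[OF R] by auto
    show "(x, y) \<in> R \<inter> U' \<times> U'" if "x \<in> {x \<in> U'. gsort x = \<sigma>}" and "(x, y) \<in> R" for x y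
      using that closed by blast
    have "{x \<in> U'. gsort x = \<sigma>} // R \<subseteq> {x \<in> U. gsort x = \<sigma>} // R"
      using \<open>U' \<subseteq> U\<close> by (auto simp: quotient_def)
    then show "finite ({x \<in> U'. gsort x = \<sigma>} // R)"
      using hr_congruence_finite[OF R] by (rule finite_subset)
  qed
  moreover have "\<forall>(x, y)\<in>R \<inter> U' \<times> U'. gsort x = gsort y"
    using hr_congruence_gsort[OF R] by blast
  moreover have "\<forall>\<tau>\<in>Rst'. \<forall>(x, y)\<in>R \<inter> U' \<times> U'.
      (g_restrict ar \<tau> x, g_restrict ar \<tau> y) \<in> R \<inter> U' \<times> U'"
    using hr_congruence_g_restrict[OF R] restrict_closed \<open>Rst' \<subseteq> Rst\<close> by blast
  moreover have "\<forall>\<alpha>\<in>Perm'. \<forall>(x, y)\<in>R \<inter> U' \<times> U'.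
      (g_rename ar \<alpha> x, g_rename ar \<alpha> y) \<in> R \<inter> U' \<times> U'"
    using hr_congruence_g_rename[OF R] rename_closed \<open>Perm' \<subseteq> Perm\<close> by blast
  moreover have "\<forall>(x, y)\<in>R \<inter> U' \<times> U'. \<forall>(x', y')\<in>R \<inter> U' \<times> U'.
      (g_par ar x x', g_par ar y y') \<in> R \<inter> U' \<times> U'"
    using hr_congruence_g_par[OF R] par_closed by blast
  ultimately show ?thesis
    unfolding hr_congruence_def using equiv by blast
qed

lemma recognizable_Gtau_if_recognizable_G:
  assumes "recognizable_G ar L" and sourceless: "\<forall>x\<in>L. gsort x = {}" and "finite \<tau>"
  shows "recognizable_Gtau ar \<tau> L"
proof -
  let ?U = "{x \<in> graphs ar. gsort x \<subseteq> \<tau>}"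
  obtain R where R: "hr_congruence ar (graphs ar) {\<tau>. finite \<tau>} {\<alpha>. finperm \<alpha>} R"
    and "L \<subseteq> graphs ar" and sat: "\<forall>(x, y)\<in>R. x \<in> L \<longrightarrow> y \<in> L"
    using assms(1) unfolding recognizable_G_def recognizable_in_def by blast
  have "hr_congruence ar ?U (Pow \<tau>) {\<alpha>. finperm \<alpha> \<and> (\<forall>s. s \<notin> \<tau> \<longrightarrow> \<alpha> s = s)} (R \<inter> ?U \<times> ?U)"
  proof (rule hr_congruence_subuniverse[OF R])
    show "Pow \<tau> \<subseteq> {\<tau>. finite \<tau>}"
      using \<open>finite \<tau>\<close> finite_subset by blast
    show "g_restrict ar \<rho> x \<in> ?U" if "\<rho> \<in> Pow \<tau>" and "x \<in> ?U" for \<rho> x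
      using that by (auto simp: g_restrict_in_graphs gsort_g_restrict)
    show "g_rename ar \<alpha> x \<in> ?U"
      if "\<alpha> \<in> {\<alpha>. finperm \<alpha> \<and> (\<forall>s. s \<notin> \<tau> \<longrightarrow> \<alpha> s = s)}" and "x \<in> ?U" for \<alpha> x
    proof -
      have \<alpha>: "bij \<alpha>" "\<And>s. s \<notin> \<tau> \<Longrightarrow> \<alpha> s = s" and x: "x \<in> graphs ar" "gsort x \<subseteq> \<tau>"
        using that by (auto simp: finperm_def)
      have "\<alpha> -` gsort x \<subseteq> \<tau>"
      proof
        fix s assume "s \<in> \<alpha> -` gsort x"
        then have "\<alpha> s \<in> \<tau>"
          using x(2) by blast
        then show "s \<in> \<tau>"
          using \<alpha>(2) by metis
      qed
      then show ?thesis
        using \<alpha>(1) x by (simp add: g_rename_in_graphs gsort_g_rename)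
    qed
    show "g_par ar x y \<in> ?U" if "x \<in> ?U" and "y \<in> ?U" for x y
      using that by (simp add: g_par_in_graphs gsort_g_par)
  qed auto
  moreover have "L \<subseteq> ?U"
    using \<open>L \<subseteq> graphs ar\<close> sourceless by auto
  ultimately show ?thesis
    unfolding recognizable_Gtau_def recognizable_in_def using sat by blast
qed

section \<open>The syntactic congruence\<close>

definition syntactic_congruence ::
  "('a \<Rightarrow> nat) \<Rightarrow> 'a cgraph set set \<Rightarrow> ('a cgraph set \<times> 'a cgraph set) set"
where
  "syntactic_congruence ar L =
     {(x, y). x \<in> graphs ar \<and> y \<in> graphs ar \<and> gsort x = gsort y \<and>
        (\<forall>H\<in>graphs ar. close_with ar H x \<in> L \<longleftrightarrow> close_with ar H y \<in> L)}"

lemma equiv_syntactic_congruence: "equiv (graphs ar) (syntactic_congruence ar L)"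
  unfolding syntactic_congruence_def by (rule equivI) (auto simp: refl_on_def sym_def trans_def)

lemma syntactic_congruence_g_restrict:
  assumes xy: "(x, y) \<in> syntactic_congruence ar L"
  shows "(g_restrict ar \<tau> x, g_restrict ar \<tau> y) \<in> syntactic_congruence ar L"
proof -
  have x: "x \<in> graphs ar" and y: "y \<in> graphs ar" and sort: "gsort x = gsort y"
    and ctx: "\<And>H. H \<in> graphs ar \<Longrightarrow> close_with ar H x \<in> L \<longleftrightarrow> close_with ar H y \<in> L"
    using xy by (auto simp: syntactic_congruence_def)
  have "close_with ar H (g_restrict ar \<tau> x) \<in> L \<longleftrightarrow> close_with ar H (g_restrict ar \<tau> y) \<in> L"
    if H: "H \<in> graphs ar" for H
  proof -
    obtain \<beta> where \<beta>: "bij \<beta>" "\<forall>s\<in>gsort x \<inter> \<tau>. \<beta> s = s" "\<beta> ` (gsort x - \<tau>) \<inter> gsort H = {}"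
      using ex_bij_fixing_avoiding[of "gsort x - \<tau>" "gsort x \<inter> \<tau>" "gsort H"] finite_gsort x H
      by auto
    then show ?thesis
      using close_with_g_restrict[OF x H] close_with_g_restrict[OF y H] ctx g_rename_in_graphs[OF H]
      by (simp add: sort)
  qed
  then show ?thesis
    using x y sort by (simp add: syntactic_congruence_def g_restrict_in_graphs gsort_g_restrict)
qed

lemma syntactic_congruence_g_rename:
  assumes xy: "(x, y) \<in> syntactic_congruence ar L" and \<alpha>: "bij \<alpha>"
  shows "(g_rename ar \<alpha> x, g_rename ar \<alpha> y) \<in> syntactic_congruence ar L"
proof -
  have x: "x \<in> graphs ar" and y: "y \<in> graphs ar" and sort: "gsort x = gsort y"
    and ctx: "\<And>H. H \<in> graphs ar \<Longrightarrow> close_with ar H x \<in> L \<longleftrightarrow> close_with ar H y \<in> L"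
    using xy by (auto simp: syntactic_congruence_def)
  have "g_rename ar (inv \<alpha>) H \<in> graphs ar" if "H \<in> graphs ar" for H
    using that \<alpha> by (simp add: g_rename_in_graphs bij_imp_bij_inv)
  then show ?thesis
    using x y sort \<alpha> ctx
    by (simp add: syntactic_congruence_def g_rename_in_graphs gsort_g_rename close_with_g_rename)
qed

lemma syntactic_congruence_g_par:
  assumes xy: "(x, y) \<in> syntactic_congruence ar L" and xy': "(x', y') \<in> syntactic_congruence ar L"
  shows "(g_par ar x x', g_par ar y y') \<in> syntactic_congruence ar L"
proof -
  have x: "x \<in> graphs ar" "x' \<in> graphs ar" and y: "y \<in> graphs ar" "y' \<in> graphs ar"
    and sort: "gsort x = gsort y" "gsort x' = gsort y'"
    and ctx: "\<And>H. H \<in> graphs ar \<Longrightarrow> close_with ar H x \<in> L \<longleftrightarrow> close_with ar H y \<in> L"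
      "\<And>H. H \<in> graphs ar \<Longrightarrow> close_with ar H x' \<in> L \<longleftrightarrow> close_with ar H y' \<in> L"
    using xy xy' by (auto simp: syntactic_congruence_def)
  have "close_with ar H (g_par ar x x') \<in> L \<longleftrightarrow> close_with ar H (g_par ar y y') \<in> L"
    if H: "H \<in> graphs ar" for H
  proof -
    have "close_with ar H (g_par ar x x') = close_with ar (g_par ar x' H) x"
      using x H by (rule close_with_g_par)
    also have "\<dots> \<in> L \<longleftrightarrow> close_with ar (g_par ar x' H) y \<in> L"
      using ctx(1) g_par_in_graphs[OF x(2) H] by blast
    also have "close_with ar (g_par ar x' H) y = close_with ar (g_par ar y H) x'"
      using close_with_g_par[OF y(1) x(2) H] close_with_g_par[OF x(2) y(1) H]
        g_par_commute[OF y(1) x(2)] by simp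
    also have "\<dots> \<in> L \<longleftrightarrow> close_with ar (g_par ar y H) y' \<in> L"
      using ctx(2) g_par_in_graphs[OF y(1) H] by blast
    also have "close_with ar (g_par ar y H) y' = close_with ar H (g_par ar y y')"
      using close_with_g_par[OF y(2) y(1) H] g_par_commute[OF y(1) y(2)] by simp
    finally show ?thesis .
  qed
  then show ?thesis
    using x y sort by (simp add: syntactic_congruence_def g_par_in_graphs gsort_g_par)
qed

lemma syntactic_congruence_saturates:
  assumes "(x, y) \<in> syntactic_congruence ar L" and "x \<in> L" and "\<forall>z\<in>L. gsort z = {}"
  shows "y \<in> L"
proof -
  have "x \<in> graphs ar" "y \<in> graphs ar" "gsort x = {}" "gsort y = {}"
    using assms by (auto simp: syntactic_congruence_def)
  moreover have "close_with ar (iso_class ar cg_empty) x \<in> L \<longleftrightarrow> close_with ar (iso_class ar cg_empty) y \<in> L"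
    using assms(1) graphsI[OF wf_cg_empty] by (auto simp: syntactic_congruence_def)
  ultimately show ?thesis
    using assms(2) by (simp add: close_with_cg_empty)
qed

lemma syntactic_congruence_if_Gtau_congruent:
  assumes R: "hr_congruence ar {x \<in> graphs ar. gsort x \<subseteq> \<sigma>} (Pow \<sigma>) Perm R"
    and sat: "\<forall>(x, y)\<in>R. x \<in> L \<longrightarrow> y \<in> L" and xy: "(x, y) \<in> R"
  shows "(x, y) \<in> syntactic_congruence ar L"
proof -
  note equiv = hr_congruence_equiv[OF R]
  have x: "x \<in> graphs ar" "gsort x \<subseteq> \<sigma>" and y: "y \<in> graphs ar" "gsort y \<subseteq> \<sigma>"
    using equiv xy by (auto simp: equiv_def refl_on_def)
  have "close_with ar H x \<in> L \<longleftrightarrow> close_with ar H y \<in> L" if H: "H \<in> graphs ar" for H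
  proof -
    let ?H = "g_restrict ar \<sigma> H"
    have "(?H, ?H) \<in> R"
      using equiv H by (auto simp: equiv_def refl_on_def g_restrict_in_graphs gsort_g_restrict)
    then have "(g_par ar x ?H, g_par ar y ?H) \<in> R"
      by (rule hr_congruence_g_par[OF R xy])
    then have "(close_with ar ?H x, close_with ar ?H y) \<in> R"
      unfolding close_with_def by (rule hr_congruence_g_restrict[OF R, rotated]) simp
    moreover have "close_with ar H x = close_with ar ?H x" and "close_with ar H y = close_with ar ?H y"
      using x y H by (simp_all add: close_with_g_restrict_sort)
    ultimately show ?thesis
      using sat equiv by (auto simp: equiv_def dest: symD)
  qed
  with x y show ?thesis
    using hr_congruence_gsort[OF R xy] by (simp add: syntactic_congruence_def)
qed

lemma finite_quotient_syntactic_congruence: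
  assumes "recognizable_Gtau ar \<sigma> L"
  shows "finite ({x \<in> graphs ar. gsort x = \<sigma>} // syntactic_congruence ar L)"
proof -
  let ?U = "{x \<in> graphs ar. gsort x \<subseteq> \<sigma>}"
  obtain R where R: "hr_congruence ar ?U (Pow \<sigma>) {\<alpha>. finperm \<alpha> \<and> (\<forall>s. s \<notin> \<sigma> \<longrightarrow> \<alpha> s = s)} R"
    and sat: "\<forall>(x, y)\<in>R. x \<in> L \<longrightarrow> y \<in> L"
    using assms unfolding recognizable_Gtau_def recognizable_in_def by blast
  have sort_class: "{x \<in> ?U. gsort x = \<sigma>} = {x \<in> graphs ar. gsort x = \<sigma>}"
    by auto
  show ?thesis
    unfolding sort_class[symmetric]
  proof (rule finite_quotient_coarser[OF hr_congruence_equiv[OF R] equiv_syntactic_congruence])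
    show "R `` {x \<in> ?U. gsort x = \<sigma>} \<subseteq> {x \<in> ?U. gsort x = \<sigma>}"
      by (rule hr_congruence_Image_sort_class[OF R])
    show "(x, y) \<in> syntactic_congruence ar L" if "(x, y) \<in> R" for x y
      using R sat that by (rule syntactic_congruence_if_Gtau_congruent)
    show "finite ({x \<in> ?U. gsort x = \<sigma>} // R)"
      by (rule hr_congruence_finite[OF R])
  qed auto
qed

lemma recognizable_G_if_recognizable_Gtau:
  assumes "L \<subseteq> graphs ar" and sourceless: "\<forall>x\<in>L. gsort x = {}"
    and Gtau: "\<forall>\<tau>. finite \<tau> \<longrightarrow> recognizable_Gtau ar \<tau> L"
  shows "recognizable_G ar L"
proof -
  let ?E = "syntactic_congruence ar L"
  have "finite ({x \<in> graphs ar. gsort x = \<sigma>} // ?E)" for \<sigma>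
  proof (cases "finite \<sigma>")
    case True
    then show ?thesis
      using Gtau finite_quotient_syntactic_congruence by blast
  next
    case False
    then have empty: "{x \<in> graphs ar. gsort x = \<sigma>} = {}"
      using finite_gsort by blast
    show ?thesis
      unfolding empty by simp
  qed
  then have "hr_congruence ar (graphs ar) {\<tau>. finite \<tau>} {\<alpha>. finperm \<alpha>} ?E"
    unfolding hr_congruence_def
    by (auto simp: equiv_syntactic_congruence syntactic_congruence_g_restrict syntactic_congruence_g_par
        syntactic_congruence_g_rename finperm_def)
      (auto simp: syntactic_congruence_def)
  then show ?thesis
    unfolding recognizable_G_def recognizable_in_def
    using assms(1) syntactic_congruence_saturates[OF _ _ sourceless] by blast
qed

theorem theorem7p4:
  fixes ar :: "'a::finite \<Rightarrow> nat" and L :: "'a cgraph set set"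
  assumes "\<forall>a. ar a \<ge> 1"
    and "L \<subseteq> graphs ar"
    and "\<forall>x\<in>L. gsort x = {}"
  shows "recognizable_G ar L \<longleftrightarrow> (\<forall>\<tau>. finite \<tau> \<longrightarrow> recognizable_Gtau ar \<tau> L)"
proof
  assume "recognizable_G ar L"
  then show "\<forall>\<tau>. finite \<tau> \<longrightarrow> recognizable_Gtau ar \<tau> L"
    using recognizable_Gtau_if_recognizable_G assms(3) by blast
next
  assume "\<forall>\<tau>. finite \<tau> \<longrightarrow> recognizable_Gtau ar \<tau> L"
  then show "recognizable_G ar L"
    using recognizable_G_if_recognizable_Gtau assms(2,3) by blast
qed

end
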